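(* Let $\mathfrak M$ be a closed O*-algebra on a dense subspace $\mathcal D$ of a Hilbert space $\mathcal H$ such that $\mathfrak M'_{\mathrm w}\mathcal D\subset\mathcal D$, and let $E'$ be a projection in $\mathfrak M'_{\mathrm w}$. Let $Z$ be the central support of $E'$, $\mathcal E:=\langle \mathfrak M'_{\mathrm w}E'\mathcal D\rangle\oplus (I-Z)\mathcal D$, and for $X\in(\mathfrak M_{E'})''_{\mathrm{wc}}$ let $X_e$ be the operator on $\mathcal E$ given by $X_e\big(\sum_k C_kE'\xi_k+(I-Z)\eta\big)=\sum_k C_kX(E'\xi_k)$ ($C_k\in\mathfrak M'_{\mathrm w}$, $\xi_k,\eta\in\mathcal D$). Suppose that (i) for every $X\in(\mathfrak M_{E'})''_{\mathrm{wc}}$ there exists $Y\in\mathfrak M''_{\mathrm{wc}}$ such that $\|X_e\xi\|\le\|Y\xi\|$ for all $\xi\in\mathcal E$; (ii) the closure of $\langle\mathfrak M'_{\mathrm w}E'\mathcal D\rangle$ in $\mathcal D$ with respect to the graph topology $t_{\mathfrak M''_{\mathrm{wc}}}$ equals $Z\mathcal D$. Then $(\mathfrak M_{E'})''_{\mathrm{wc}}=(\mathfrak M''_{\mathrm{wc}})_{E'}$.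
   Context: For a dense subspace $\mathcal D$ of $\mathcal H$, $\mathcal L^\dagger(\mathcal D)$ is the set of linear operators $X$ with domain $\mathcal D$ such that $X\mathcal D\subset\mathcal D$, $\mathcal D\subset D(X^* )$, $X^*\mathcal D\subset\mathcal D$, a *-algebra with involution $X^\dagger:=X^*\upharpoonright\mathcal D$. An O*-algebra on $\mathcal D$ is a *-subalgebra of $\mathcal L^\dagger(\mathcal D)$ containing the identity. The graph topology $t_{\mathfrak M}$ is defined by the seminorms $\xi\mapsto\|X\xi\|$, $X\in\mathfrak M$; $\mathfrak M$ is closed if $\mathcal D[t_{\mathfrak M}]$ is complete. Weak commutant: $\mathfrak M'_{\mathrm w}=\{C\in\mathcal B(\mathcal H):\langle CX\xi,\eta\rangle=\langle C\xi,X^\dagger\eta\rangle\ \forall X\in\mathfrak M,\ \xi,\eta\in\mathcal D\}$ (a von Neumann algebra when $\mathfrak M'_{\mathrm w}\mathcal D\subset\mathcal D$). Unbounded bicommutant: $\mathfrak M''_{\mathrm{wc}}=\{X\in\mathcal L^\dagger(\mathcal D):\langle CX\xi,\eta\rangle=\langle C\xi,X^\dagger\eta\rangle\ \forall C\in\mathfrak M'_{\mathrm w},\ \xi,\eta\in\mathcal D\}$; it satisfies $(\mathfrak M''_{\mathrm{wc}})'_{\mathrm w}=\mathfrak M'_{\mathrm w}$. For an O*-algebra $\mathfrak N$ on $\mathcal D$ and a projection $E'\in\mathfrak N'_{\mathrm w}$ with $E'\mathcal D\subset\mathcal D$, the reduced algebra is $\mathfrak N_{E'}=\{XE'\upharpoonright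 E'\mathcal D: X\in\mathfrak N\}$, an O*-algebra on $E'\mathcal D$ in the Hilbert space $E'\mathcal H$; $(\mathfrak M_{E'})''_{\mathrm{wc}}$ is its unbounded bicommutant computed relative to $E'\mathcal D\subset E'\mathcal H$. The central support $Z$ of $E'$ is the projection onto the closure of $\langle\mathfrak M'_{\mathrm w}E'\mathcal H\rangle$; $\langle\cdot\rangle$ denotes linear span. *)

theory Defs
  imports Complex_Main
begin

record 'a hs =
  hs_sm :: "complex \<Rightarrow> 'a \<Rightarrow> 'a"
  hs_ip :: "'a \<Rightarrow> 'a \<Rightarrow> complex"

definition hnorm :: "'a hs \<Rightarrow> 'a \<Rightarrow> real" where
  "hnorm H x = sqrt (Re (hs_ip H x x))"

definition is_hilbert :: "('a::ab_group_add) hs \<Rightarrow> bool" where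
  "is_hilbert H \<longleftrightarrow>
     vector_space (hs_sm H) \<and>
     (\<forall>x y z. hs_ip H (x + y) z = hs_ip H x z + hs_ip H y z) \<and>
     (\<forall>c x y. hs_ip H (hs_sm H c x) y = c * hs_ip H x y) \<and>
     (\<forall>x y. hs_ip H y x = cnj (hs_ip H x y)) \<and>
     (\<forall>x. x \<noteq> 0 \<longrightarrow> 0 < Re (hs_ip H x x)) \<and>
     (\<forall>f :: nat \<Rightarrow> 'a.
        (\<forall>e>0. \<exists>N. \<forall>m\<ge>N. \<forall>n\<ge>N. hnorm H (f m - f n) < e) \<longrightarrow>
        (\<exists>l. \<forall>e>0. \<exists>N. \<forall>n\<ge>N. hnorm H (f n - l) < e))"

definition hsubspace :: "('a::ab_group_add) hs \<Rightarrow> 'a set \<Rightarrow> bool" where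
  "hsubspace H S \<longleftrightarrow> 0 \<in> S \<and> (\<forall>x\<in>S. \<forall>y\<in>S. x + y \<in> S) \<and>
     (\<forall>c. \<forall>x\<in>S. hs_sm H c x \<in> S)"

definition hclosure :: "('a::ab_group_add) hs \<Rightarrow> 'a set \<Rightarrow> 'a set" where
  "hclosure H S = {x. \<forall>e>0. \<exists>y\<in>S. hnorm H (x - y) < e}"

definition bop :: "('a::ab_group_add) hs \<Rightarrow> 'a set \<Rightarrow> ('a \<Rightarrow> 'a) \<Rightarrow> bool" where
  "bop H K C \<longleftrightarrow> (\<forall>x\<in>K. C x \<in> K) \<and>
     (\<forall>x\<in>K. \<forall>y\<in>K. C (x + y) = C x + C y) \<and>
     (\<forall>c. \<forall>x\<in>K. C (hs_sm H c x) = hs_sm H c (C x)) \<and>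
     (\<exists>B. \<forall>x\<in>K. hnorm H (C x) \<le> B * hnorm H x) \<and>
     (\<forall>x. x \<notin> K \<longrightarrow> C x = 0)"

definition is_projection :: "('a::ab_group_add) hs \<Rightarrow> 'a set \<Rightarrow> ('a \<Rightarrow> 'a) \<Rightarrow> bool" where
  "is_projection H K P \<longleftrightarrow> bop H K P \<and> (\<forall>x\<in>K. P (P x) = P x) \<and>
     (\<forall>x\<in>K. \<forall>y\<in>K. hs_ip H (P x) y = hs_ip H x (P y))"

text \<open>L^dagger(D): operators with domain D (normalised to 0 outside D),
  X D \<subseteq> D, D \<subseteq> D(X^*), X^* D \<subseteq> D.\<close>
definition ldag :: "('a::ab_group_add) hs \<Rightarrow> 'a set \<Rightarrow> ('a \<Rightarrow> 'a) \<Rightarrow> bool" where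
  "ldag H D X \<longleftrightarrow> (\<forall>x\<in>D. X x \<in> D) \<and>
     (\<forall>x\<in>D. \<forall>y\<in>D. X (x + y) = X x + X y) \<and>
     (\<forall>c. \<forall>x\<in>D. X (hs_sm H c x) = hs_sm H c (X x)) \<and>
     (\<forall>x. x \<notin> D \<longrightarrow> X x = 0) \<and>
     (\<forall>\<eta>\<in>D. \<exists>\<zeta>\<in>D. \<forall>\<xi>\<in>D. hs_ip H (X \<xi>) \<eta> = hs_ip H \<xi> \<zeta>)"

definition dag :: "('a::ab_group_add) hs \<Rightarrow> 'a set \<Rightarrow> ('a \<Rightarrow> 'a) \<Rightarrow> ('a \<Rightarrow> 'a)" where
  "dag H D X = (\<lambda>\<eta>. if \<eta> \<in> D then (THE \<zeta>. \<zeta> \<in> D \<and> (\<forall>\<xi>\<in>D. hs_ip H (X \<xi>) \<eta> = hs_ip H \<xi> \<zeta>))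
                     else 0)"

definition idop :: "'a set \<Rightarrow> ('a::ab_group_add \<Rightarrow> 'a)" where
  "idop D = (\<lambda>x. if x \<in> D then x else 0)"

definition ostar_alg :: "('a::ab_group_add) hs \<Rightarrow> 'a set \<Rightarrow> ('a \<Rightarrow> 'a) set \<Rightarrow> bool" where
  "ostar_alg H D M \<longleftrightarrow> (\<forall>X\<in>M. ldag H D X) \<and> idop D \<in> M \<and>
     (\<forall>X\<in>M. \<forall>Y\<in>M. (\<lambda>x. X x + Y x) \<in> M) \<and>
     (\<forall>c. \<forall>X\<in>M. (\<lambda>x. hs_sm H c (X x)) \<in> M) \<and>
     (\<forall>X\<in>M. \<forall>Y\<in>M. X \<circ> Y \<in> M) \<and>
     (\<forall>X\<in>M. dag H D X \<in> M)"

text \<open>Closed: D is complete for the graph topology t_M (every Cauchy filter on D converges).\<close>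
definition closed_ostar :: "('a::ab_group_add) hs \<Rightarrow> 'a set \<Rightarrow> ('a \<Rightarrow> 'a) set \<Rightarrow> bool" where
  "closed_ostar H D M \<longleftrightarrow> ostar_alg H D M \<and>
     (\<forall>F :: 'a filter. F \<noteq> bot \<and> eventually (\<lambda>x. x \<in> D) F \<and>
        (\<forall>X\<in>M. \<forall>e>0. \<exists>P. eventually P F \<and>
            (\<forall>x y. P x \<and> P y \<and> x \<in> D \<and> y \<in> D \<longrightarrow> hnorm H (X (x - y)) < e)) \<longrightarrow>
        (\<exists>l\<in>D. \<forall>X\<in>M. \<forall>e>0. eventually (\<lambda>x. hnorm H (X (x - l)) < e) F))"

definition wcomm :: "('a::ab_group_add) hs \<Rightarrow> 'a set \<Rightarrow> 'a set \<Rightarrow> ('a \<Rightarrow> 'a) set \<Rightarrow> ('a \<Rightarrow> 'a) set" where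
  "wcomm H K D M = {C. bop H K C \<and>
     (\<forall>X\<in>M. \<forall>\<xi>\<in>D. \<forall>\<eta>\<in>D. hs_ip H (C (X \<xi>)) \<eta> = hs_ip H (C \<xi>) (dag H D X \<eta>))}"

definition bicomm :: "('a::ab_group_add) hs \<Rightarrow> 'a set \<Rightarrow> 'a set \<Rightarrow> ('a \<Rightarrow> 'a) set \<Rightarrow> ('a \<Rightarrow> 'a) set" where
  "bicomm H K D M = {X. ldag H D X \<and>
     (\<forall>C\<in>wcomm H K D M. \<forall>\<xi>\<in>D. \<forall>\<eta>\<in>D. hs_ip H (C (X \<xi>)) \<eta> = hs_ip H (C \<xi>) (dag H D X \<eta>))}"

definition reduce :: "('a \<Rightarrow> 'a) \<Rightarrow> 'a set \<Rightarrow> ('a \<Rightarrow> 'a) set \<Rightarrow> ('a::ab_group_add \<Rightarrow> 'a) set" where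
  "reduce E D N = (\<lambda>X. \<lambda>x. if x \<in> E ` D then X (E x) else 0) ` N"

definition orth_proj :: "('a::ab_group_add) hs \<Rightarrow> 'a set \<Rightarrow> 'a \<Rightarrow> 'a" where
  "orth_proj H S x = (THE y. y \<in> S \<and> (\<forall>z\<in>S. hs_ip H (x - y) z = 0))"

definition central_support :: "('a::ab_group_add) hs \<Rightarrow> 'a set \<Rightarrow> 'a set \<Rightarrow> ('a \<Rightarrow> 'a) set \<Rightarrow> ('a \<Rightarrow> 'a) \<Rightarrow> 'a \<Rightarrow> 'a" where
  "central_support H K D M E = orth_proj H
     (hclosure H (module.span (hs_sm H) {C (E x) | C x. C \<in> wcomm H K D M \<and> x \<in> K}))"

text \<open>Closure of S in D for the graph topology t_N (N a set of operators on D).\<close>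
definition tclosure :: "('a::ab_group_add) hs \<Rightarrow> ('a \<Rightarrow> 'a) set \<Rightarrow> 'a set \<Rightarrow> 'a set \<Rightarrow> 'a set" where
  "tclosure H N D S = {x\<in>D. \<forall>F. finite F \<and> F \<subseteq> N \<longrightarrow>
     (\<forall>e>0. \<exists>y\<in>S. \<forall>Y\<in>F. hnorm H (Y (x - y)) < e)}"

end

theory Submission
  imports Defs
begin

text \<open>
  The inclusion from right to left is routine: if \<open>C\<close> lies in the weak commutant of the reduced
  algebra then \<open>C E'\<close> lies in \<open>\<M>'\<^sub>w\<close>, so \<open>Y E'\<close> commutes weakly with \<open>C\<close> for every \<open>Y\<close> in
  \<open>\<M>''\<^sub>w\<^sub>c\<close>.

  Conversely let \<open>X\<close> lie in \<open>(\<M>\<^sub>E\<^sub>')''\<^sub>w\<^sub>c\<close> and let \<open>Y\<close> dominate \<open>X\<^sub>e\<close> as in (i). By (ii) every \<open>w \<in> Z\<D>\<close>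
  is approximated, in the graph topology of \<open>\<M>''\<^sub>w\<^sub>c\<close>, by sums \<open>u = \<Sum>\<^sub>k C\<^sub>k E' \<xi>\<^sub>k\<close>. For \<open>A \<in> \<M>\<close> the
  operator \<open>A\<^sub>E\<^sub>' X\<close> again lies in \<open>(\<M>\<^sub>E\<^sub>')''\<^sub>w\<^sub>c\<close> and is dominated by some \<open>Y\<^sub>A\<close>, so the values \<open>X\<^sub>e u\<close> form
  a Cauchy net for the graph topology of \<open>\<M>\<close>; as \<open>\<M>\<close> is closed they converge to some \<open>X\<^sup>~ w \<in> \<D>\<close>.
  Setting \<open>X\<^sup>~ \<xi> := X\<^sup>~ (Z \<xi>)\<close> gives a linear operator that commutes with \<open>\<M>'\<^sub>w\<close>, whose adjoint is
  \<open>(X\<^sup>\<dagger>)\<^sup>~\<close> by the finite identity \<open>\<langle>X\<^sub>e u, v\<rangle> = \<langle>u, (X\<^sup>\<dagger>)\<^sub>e v\<rangle>\<close>, and which agrees with \<open>X\<close> on \<open>E'\<D>\<close>.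
  Hence \<open>X = X\<^sup>~ E'\<close> with \<open>X\<^sup>~ \<in> \<M>''\<^sub>w\<^sub>c\<close>.
\<close>

section \<open>Inner product spaces\<close>

locale hilbert_space =
  fixes H :: "('a::ab_group_add) hs"
  assumes hilb: "is_hilbert H"
begin

sublocale vs: vector_space "hs_sm H"
  using hilb unfolding is_hilbert_def by (rule conjunct1)

abbreviation sm where "sm \<equiv> hs_sm H"
abbreviation ip where "ip \<equiv> hs_ip H"
abbreviation nm where "nm \<equiv> hnorm H"

lemma ip_add_left: "ip (x + y) z = ip x z + ip y z"
  using hilb unfolding is_hilbert_def by blast
lemma ip_scale_left: "ip (sm c x) y = c * ip x y"
  using hilb unfolding is_hilbert_def by blast
lemma ip_sym: "ip y x = cnj (ip x y)"
  using hilb unfolding is_hilbert_def by blast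
lemma ip_self_pos: "x \<noteq> 0 \<Longrightarrow> 0 < Re (ip x x)"
  using hilb unfolding is_hilbert_def by blast
lemma complete:
  fixes f :: "nat \<Rightarrow> 'a"
  assumes "\<forall>e>0. \<exists>N. \<forall>m\<ge>N. \<forall>n\<ge>N. nm (f m - f n) < e"
  shows "\<exists>l. \<forall>e>0. \<exists>N. \<forall>n\<ge>N. nm (f n - l) < e"
  using hilb assms unfolding is_hilbert_def by blast

lemma ip_add_right: "ip x (y + z) = ip x y + ip x z"
  by (metis complex_cnj_add ip_add_left ip_sym)
lemma ip_scale_right: "ip x (sm c y) = cnj c * ip x y"
  by (metis complex_cnj_mult ip_scale_left ip_sym)
lemma ip_zero_left[simp]: "ip 0 y = 0"
  by (metis add_cancel_right_left add_left_cancel ip_add_left add.right_neutral)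
lemma ip_zero_right[simp]: "ip x 0 = 0"
  by (metis complex_cnj_zero ip_sym ip_zero_left)
lemma ip_minus_left: "ip (- x) y = - ip x y"
  by (metis add.right_inverse eq_neg_iff_add_eq_0 ip_add_left ip_zero_left)
lemma ip_minus_right: "ip x (- y) = - ip x y"
  by (metis complex_cnj_minus ip_minus_left ip_sym)
lemma ip_diff_left: "ip (x - y) z = ip x z - ip y z"
  by (metis diff_conv_add_uminus ip_add_left ip_minus_left)
lemma ip_diff_right: "ip x (y - z) = ip x y - ip x z"
  by (metis diff_conv_add_uminus ip_add_right ip_minus_right)
lemma ip_eq_zero_sym: "ip x y = 0 \<longleftrightarrow> ip y x = 0"
  by (metis complex_cnj_zero complex_cnj_zero_iff ip_sym)

lemma ip_self_real: "ip x x = of_real (Re (ip x x))"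
  by (metis Reals_cnj_iff complex_is_Real_iff ip_sym of_real_Re)
lemma ip_self_nonneg: "0 \<le> Re (ip x x)"
  by (cases "x = 0") (simp_all add: ip_self_pos less_imp_le)
lemma nm_nonneg[simp]: "0 \<le> nm x"
  by (simp add: hnorm_def ip_self_nonneg)
lemma nm_sq: "(nm x)^2 = Re (ip x x)"
  by (simp add: hnorm_def ip_self_nonneg)
lemma ip_self_nm: "ip x x = of_real ((nm x)^2)"
  by (metis ip_self_real nm_sq)
lemma nm_zero[simp]: "nm 0 = 0"
  by (simp add: hnorm_def)
lemma nm_eq_0_iff: "nm x = 0 \<longleftrightarrow> x = 0"
  by (metis hnorm_def ip_self_pos less_irrefl nm_zero real_sqrt_eq_zero_cancel_iff)
lemma nm_pos: "x \<noteq> 0 \<Longrightarrow> 0 < nm x"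
  by (metis le_less nm_eq_0_iff nm_nonneg)
lemma ip_self_eq_0_iff: "ip x x = 0 \<longleftrightarrow> x = 0"
  by (metis ip_self_pos ip_zero_left less_irrefl zero_complex.sel(1))

lemma cauchy_schwarz: "cmod (ip x y) \<le> nm x * nm y"
proof (cases "y = 0")
  case True then show ?thesis by simp
next
  case False
  define r where "r = Re (ip y y)"
  have r: "r > 0" using ip_self_pos[OF False] r_def by simp
  have ryy: "ip y y = of_real r" using ip_self_real r_def by simp
  define t where "t = ip x y / of_real r"
  have cnsq: "(complex_of_real (cmod (ip x y)))^2 = ip x y * cnj (ip x y)"
    by (metis complex_norm_square of_real_power)
  have "0 \<le> Re (ip (x - sm t y) (x - sm t y))" by (rule ip_self_nonneg)
  also have "ip (x - sm t y) (x - sm t y) = ip x x - cnj t * ip x y - t * ip y x + t * cnj t * ip y y"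
    by (simp add: ip_diff_left ip_diff_right ip_scale_left ip_scale_right algebra_simps)
  also have "\<dots> = ip x x - of_real ((cmod (ip x y))^2 / r)"
    using r unfolding t_def ryy ip_sym[of y x] by (simp add: field_simps cnsq)
  finally have "(cmod (ip x y))^2 / r \<le> Re (ip x x)" by simp
  hence "(cmod (ip x y))^2 \<le> (nm x * nm y)^2"
    using r by (simp add: nm_sq r_def field_simps power_mult_distrib)
  thus ?thesis by (rule power2_le_imp_le) simp
qed

lemma ip_bound: "nm a \<le> s \<Longrightarrow> nm b \<le> t \<Longrightarrow> cmod (ip a b) \<le> s * t"
  by (meson cauchy_schwarz mult_mono nm_nonneg order_trans)

lemma ip_self_add: "ip (x + y) (x + y) = ip x x + ip x y + cnj (ip x y) + ip y y"
  by (simp add: ip_add_left ip_add_right ip_sym[of y x])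
lemma ip_self_diff: "ip (x - y) (x - y) = ip x x - ip x y - cnj (ip x y) + ip y y"
  by (simp add: ip_diff_left ip_diff_right ip_sym[of y x])

lemma nm_triangle: "nm (x + y) \<le> nm x + nm y"
proof -
  have "(nm (x + y))^2 = Re (ip x x) + 2 * Re (ip x y) + Re (ip y y)"
    by (simp add: nm_sq ip_self_add)
  also have "\<dots> \<le> (nm x)^2 + 2 * (nm x * nm y) + (nm y)^2"
    using cauchy_schwarz[of x y] complex_Re_le_cmod[of "ip x y"] by (simp add: nm_sq)
  also have "\<dots> = (nm x + nm y)^2" by (simp add: power2_eq_square algebra_simps)
  finally show ?thesis by (rule power2_le_imp_le) simp
qed

lemma nm_scale: "nm (sm c x) = cmod c * nm x"
proof -
  have "ip (sm c x) (sm c x) = (c * cnj c) * ip x x"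
    by (simp add: ip_scale_left ip_scale_right)
  also have "c * cnj c = of_real ((cmod c)^2)" by (metis complex_norm_square)
  finally have "(nm (sm c x))^2 = (cmod c * nm x)^2"
    by (simp add: nm_sq power_mult_distrib)
  thus ?thesis by (simp add: power2_eq_iff_nonneg)
qed

lemma nm_minus: "nm (- x) = nm x"
  using nm_scale[of "-1" x] by simp

lemma nm_commute: "nm (x - y) = nm (y - x)"
  by (metis minus_diff_eq nm_minus)

lemma nm_triangle_diff: "nm (x - z) \<le> nm (x - y) + nm (y - z)"
  by (metis diff_add_cancel add_diff_eq nm_triangle diff_diff_eq2)

lemma nm_diff_le: "nm (x - y) \<le> nm x + nm y"
  by (metis diff_conv_add_uminus nm_minus nm_triangle)

lemma parallelogram: "(nm (a - b))^2 + (nm (a + b))^2 = 2 * (nm a)^2 + 2 * (nm b)^2"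
  by (simp add: nm_sq ip_self_diff ip_self_add)

lemma nm_small_zero: "(\<And>e. e > 0 \<Longrightarrow> nm x < e) \<Longrightarrow> x = 0"
  using nm_eq_0_iff nm_pos by force

lemma ip_eqI_right: "(\<And>x. ip x z1 = ip x z2) \<Longrightarrow> z1 = z2"
  by (metis eq_iff_diff_eq_0 ip_diff_right ip_self_eq_0_iff)

lemma hsubspace_0: "hsubspace H K \<Longrightarrow> 0 \<in> K"
  by (simp add: hsubspace_def)
lemma hsubspace_add: "hsubspace H K \<Longrightarrow> x \<in> K \<Longrightarrow> y \<in> K \<Longrightarrow> x + y \<in> K"
  by (simp add: hsubspace_def)
lemma hsubspace_scale: "hsubspace H K \<Longrightarrow> x \<in> K \<Longrightarrow> sm c x \<in> K"
  by (simp add: hsubspace_def)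
lemma hsubspace_minus: "hsubspace H K \<Longrightarrow> x \<in> K \<Longrightarrow> - x \<in> K"
  using hsubspace_scale[of K x "-1"] by simp
lemma hsubspace_diff: "hsubspace H K \<Longrightarrow> x \<in> K \<Longrightarrow> y \<in> K \<Longrightarrow> x - y \<in> K"
  by (metis diff_conv_add_uminus hsubspace_add hsubspace_minus)
lemma hsubspace_UNIV: "hsubspace H UNIV"
  by (simp add: hsubspace_def)
lemma hsubspace_iff_subspace: "hsubspace H S \<longleftrightarrow> vs.subspace S"
  unfolding vs.subspace_def hsubspace_def by auto

lemma hclosureD: "x \<in> hclosure H S \<Longrightarrow> e > 0 \<Longrightarrow> \<exists>y\<in>S. nm (x - y) < e"
  unfolding hclosure_def by blast
lemma hclosureI: "(\<And>e. e > 0 \<Longrightarrow> \<exists>y\<in>S. nm (x - y) < e) \<Longrightarrow> x \<in> hclosure H S"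
  unfolding hclosure_def by blast

lemma hclosure_superset: "S \<subseteq> hclosure H S"
proof
  fix x assume "x \<in> S"
  thus "x \<in> hclosure H S" by (intro hclosureI bexI[of _ x]) auto
qed

lemma hclosure_hclosure: "hclosure H (hclosure H S) \<subseteq> hclosure H S"
proof
  fix x assume x: "x \<in> hclosure H (hclosure H S)"
  show "x \<in> hclosure H S"
  proof (rule hclosureI)
    fix e :: real assume e: "e > 0"
    obtain y where y: "y \<in> hclosure H S" "nm (x - y) < e/2" using hclosureD[OF x, of "e/2"] e by auto
    obtain z where z: "z \<in> S" "nm (y - z) < e/2" using hclosureD[OF y(1), of "e/2"] e by auto
    have "nm (x - z) < e" using nm_triangle_diff[of x z y] y z by linarith
    thus "\<exists>y\<in>S. nm (x - y) < e" using z by blast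
  qed
qed

lemma hsubspace_hclosure:
  assumes S: "hsubspace H S" shows "hsubspace H (hclosure H S)"
  unfolding hsubspace_def
proof (intro conjI ballI allI)
  show "0 \<in> hclosure H S" using hclosure_superset hsubspace_0[OF S] by blast
next
  fix x y assume x: "x \<in> hclosure H S" and y: "y \<in> hclosure H S"
  show "x + y \<in> hclosure H S"
  proof (rule hclosureI)
    fix e :: real assume e: "e > 0"
    obtain a where a: "a \<in> S" "nm (x - a) < e/2" using hclosureD[OF x, of "e/2"] e by auto
    obtain b where b: "b \<in> S" "nm (y - b) < e/2" using hclosureD[OF y, of "e/2"] e by auto
    have eq: "x + y - (a + b) = (x - a) + (y - b)" by (simp add: algebra_simps)
    have "nm (x + y - (a + b)) \<le> nm (x - a) + nm (y - b)" by (subst eq) (rule nm_triangle)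
    hence "nm (x + y - (a + b)) < e" using a b by linarith
    thus "\<exists>z\<in>S. nm (x + y - z) < e" using a b hsubspace_add[OF S] by blast
  qed
next
  fix c x assume x: "x \<in> hclosure H S"
  show "sm c x \<in> hclosure H S"
  proof (rule hclosureI)
    fix e :: real assume e: "e > 0"
    have e': "e / (cmod c + 1) > 0" using e by (simp add: add_nonneg_pos)
    obtain a where a: "a \<in> S" "nm (x - a) < e / (cmod c + 1)" using hclosureD[OF x e'] by auto
    have "nm (sm c x - sm c a) = cmod c * nm (x - a)"
      by (simp add: nm_scale flip: vs.scale_right_diff_distrib)
    also have "\<dots> \<le> (cmod c + 1) * nm (x - a)" by (simp add: mult_right_mono)
    also have "\<dots> < e" using a(2) by (simp add: pos_less_divide_eq mult.commute add_nonneg_pos)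
    finally show "\<exists>z\<in>S. nm (sm c x - z) < e" using a hsubspace_scale[OF S] by blast
  qed
qed

lemma nearest_point_orthogonal:
  assumes K: "hsubspace H K" and y: "y \<in> K" and nearest: "\<forall>z\<in>K. nm (x - y) \<le> nm (x - z)"
    and z: "z \<in> K"
  shows "ip (x - y) z = 0"
proof (rule ccontr)
  define v where "v = x - y"
  define w where "w = ip v z"
  assume "ip (x - y) z \<noteq> 0"
  hence "w \<noteq> 0" by (simp add: v_def w_def)
  define q where "q = (cmod w)^2"
  have q: "q > 0" using \<open>w \<noteq> 0\<close> by (simp add: q_def)
  have hq: "w * cnj w = of_real q" by (metis q_def complex_norm_square)
  define s where "s = 1 / ((nm z)^2 + 1)"
  have p1: "(nm z)^2 + 1 > 0" by (simp add: add_nonneg_pos)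
  have s: "s > 0" and s1: "s * (nm z)^2 < 1" using p1 by (simp_all add: s_def field_simps)
  \<comment> \<open>moving from \<open>y\<close> towards \<open>z\<close> by the small step \<open>s w\<close> would decrease the distance to \<open>x\<close>\<close>
  define c where "c = of_real s * w"
  have "y + sm c z \<in> K" using K y z by (simp add: hsubspace_add hsubspace_scale)
  moreover have "x - (y + sm c z) = v - sm c z" by (simp add: v_def algebra_simps)
  ultimately have "nm v \<le> nm (v - sm c z)" using nearest v_def by metis
  hence "(nm v)^2 \<le> (nm (v - sm c z))^2" by (simp add: power_mono)
  moreover
  have e1: "ip (v - sm c z) (v - sm c z) = ip v v - cnj c * w - c * cnj w + c * cnj c * ip z z"
    by (simp add: ip_self_diff ip_scale_left ip_scale_right w_def ip_sym[of z v] algebra_simps)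
  have e2: "cnj c * w = of_real (s * q)" "c * cnj w = of_real (s * q)"
    "c * cnj c * ip z z = of_real (s^2 * q * (nm z)^2)"
    by (simp_all add: c_def hq[symmetric] ip_self_nm power2_eq_square algebra_simps)
  have "(nm (v - sm c z))^2 = (nm v)^2 - 2 * s * q + s^2 * q * (nm z)^2"
    using nm_sq[of "v - sm c z"] unfolding e1 e2 ip_self_nm[of v] by simp
  ultimately have "2 * (s * q) \<le> (s * q) * (s * (nm z)^2)"
    by (simp add: power2_eq_square algebra_simps)
  hence "2 \<le> s * (nm z)^2" using s q by (simp add: mult_le_cancel_left1)
  thus False using s1 by linarith
qed

lemma parallelogram_distance_bound:
  assumes K: "hsubspace H K" and y1: "y1 \<in> K" and y2: "y2 \<in> K"
    and d: "0 \<le> d" "\<forall>y\<in>K. d \<le> nm (x - y)"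
  shows "(nm (y1 - y2))^2 \<le> 2 * (nm (x - y1))^2 + 2 * (nm (x - y2))^2 - 4 * d^2"
proof -
  define m where "m = sm (1/2) (y1 + y2)"
  have "m \<in> K" using K y1 y2 by (simp add: m_def hsubspace_add hsubspace_scale)
  have "sm 2 m = y1 + y2" by (simp add: m_def)
  moreover have "sm 2 x = x + x" using vs.scale_left_distrib[of 1 1 x] by simp
  ultimately have "sm 2 (x - m) = (x - y1) + (x - y2)"
    by (simp add: vs.scale_right_diff_distrib algebra_simps)
  hence "nm ((x - y1) + (x - y2)) = 2 * nm (x - m)" by (metis nm_scale norm_numeral)
  hence "nm ((x - y1) + (x - y2)) \<ge> 2 * d" using d \<open>m \<in> K\<close> by simp
  hence "(nm ((x - y1) + (x - y2)))^2 \<ge> (2 * d)^2" by (rule power_mono) (use d in simp)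
  thus ?thesis using parallelogram[of "x - y1" "x - y2"] nm_commute[of y1 y2]
    by (simp add: power2_eq_square)
qed

lemma minimizing_sequence_Cauchy:
  assumes K: "hsubspace H K" and y: "\<And>n. y n \<in> K"
    and d: "0 \<le> d" "\<forall>z\<in>K. d \<le> nm (x - z)" and near: "\<And>n. nm (x - y n) < d + 1 / (real n + 1)"
  shows "\<forall>e>0. \<exists>N. \<forall>m\<ge>N. \<forall>n\<ge>N. nm (y m - y n) < e"
proof (intro allI impI)
  fix e :: real assume e: "e > 0"
  obtain N :: nat where N: "(4 * d + 2) * 2 / e^2 < real N + 1"
    using reals_Archimedean2[of "(4 * d + 2) * 2 / e^2"] by (metis add.commute add_strict_increasing zero_less_one less_imp_le)
  have "(nm (y m - y n))^2 < e^2" if "m \<ge> N" "n \<ge> N" for m n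
  proof -
    define a where "a = 1 / (real m + 1)"
    define b where "b = 1 / (real n + 1)"
    have a: "0 < a" "a \<le> 1" and b: "0 < b" "b \<le> 1" by (simp_all add: a_def b_def)
    have ab: "a + b \<le> 2 / (real N + 1)"
      using that frac_le[of 1 1 "real N + 1" "real m + 1"] frac_le[of 1 1 "real N + 1" "real n + 1"]
      by (simp add: a_def b_def)
    have "(nm (x - y m))^2 \<le> (d + a)^2" "(nm (x - y n))^2 \<le> (d + b)^2"
      using near[of m] near[of n] by (simp_all add: a_def b_def power_mono less_imp_le)
    hence "(nm (y m - y n))^2 \<le> 2 * (d + a)^2 + 2 * (d + b)^2 - 4 * d^2"
      using parallelogram_distance_bound[OF K y y d, of m n] by linarith
    also have "\<dots> = 4 * d * (a + b) + 2 * a * a + 2 * b * b"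
      by (simp add: power2_eq_square algebra_simps)
    also have "\<dots> \<le> 4 * d * (a + b) + 2 * a + 2 * b"
      using mult_left_le[of a a] mult_left_le[of b b] a b by linarith
    also have "\<dots> = (4 * d + 2) * (a + b)" by (simp add: algebra_simps)
    also have "\<dots> \<le> (4 * d + 2) * (2 / (real N + 1))" using ab d by (intro mult_left_mono) auto
    also have "\<dots> < e^2" using N e by (simp add: field_simps)
    finally show ?thesis .
  qed
  thus "\<exists>N. \<forall>m\<ge>N. \<forall>n\<ge>N. nm (y m - y n) < e"
    using e by (metis nm_nonneg power_less_imp_less_base less_imp_le)
qed

lemma nearest_point_exists:
  assumes K: "hsubspace H K" and closed: "hclosure H K \<subseteq> K"
  shows "\<exists>l\<in>K. \<forall>z\<in>K. nm (x - l) \<le> nm (x - z)"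
proof -
  define d where "d = Inf ((\<lambda>y. nm (x - y)) ` K)"
  have ne: "(\<lambda>y. nm (x - y)) ` K \<noteq> {}" using hsubspace_0[OF K] by auto
  have bdd: "bdd_below ((\<lambda>y. nm (x - y)) ` K)" by (rule bdd_belowI[of _ 0]) auto
  have d_le: "\<forall>z\<in>K. d \<le> nm (x - z)" unfolding d_def using bdd by (auto intro: cInf_lower)
  have d0: "d \<ge> 0" unfolding d_def using ne by (auto intro: cInf_greatest)
  have "\<exists>y\<in>K. nm (x - y) < d + 1 / (real n + 1)" for n
    using cInf_less_iff[OF ne bdd, of "d + 1 / (real n + 1)"] by (simp add: d_def)
  then obtain y where y: "\<And>n. y n \<in> K" and near: "\<And>n. nm (x - y n) < d + 1 / (real n + 1)"
    by metis
  obtain l where l: "\<forall>e>0. \<exists>N. \<forall>n\<ge>N. nm (y n - l) < e"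
    using complete[OF minimizing_sequence_Cauchy[OF K y d0 d_le near]] by blast
  have "l \<in> hclosure H K"
  proof (rule hclosureI)
    fix e :: real assume "e > 0"
    then obtain N where "\<forall>n\<ge>N. nm (y n - l) < e" using l by blast
    thus "\<exists>z\<in>K. nm (l - z) < e" using y nm_commute by (metis order_refl)
  qed
  hence "l \<in> K" using closed by blast
  moreover have "nm (x - l) \<le> d"
  proof (rule field_le_epsilon)
    fix e :: real assume e: "e > 0"
    obtain N where N: "\<forall>n\<ge>N. nm (y n - l) < e/2" using l e by (meson half_gt_zero)
    obtain M :: nat where M: "2 / e < real M + 1"
      using reals_Archimedean2[of "2 / e"] by (metis add.commute add_strict_increasing zero_less_one less_imp_le)
    define n where "n = max N M"
    have "1 / (real n + 1) \<le> 1 / (real M + 1)" by (simp add: n_def frac_le)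
    also have "\<dots> < e / 2" using M e by (simp add: field_simps)
    finally have "nm (x - y n) < d + e/2" using near[of n] by linarith
    moreover have "nm (y n - l) < e/2" using N by (simp add: n_def)
    ultimately show "nm (x - l) \<le> d + e" using nm_triangle_diff[of x l "y n"] by linarith
  qed
  ultimately show ?thesis using d_le by force
qed

lemma orthogonal_decomposition_exists:
  assumes K: "hsubspace H K" and closed: "hclosure H K \<subseteq> K"
  shows "\<exists>y\<in>K. \<forall>z\<in>K. ip (x - y) z = 0"
  using nearest_point_exists[OF assms] nearest_point_orthogonal[OF K] by blast

lemma orth_proj_eqI:
  assumes K: "hsubspace H K" and y: "y \<in> K" "\<forall>z\<in>K. ip (x - y) z = 0"
  shows "orth_proj H K x = y"
  unfolding orth_proj_def
proof (rule the_equality)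
  fix y' assume y': "y' \<in> K \<and> (\<forall>z\<in>K. ip (x - y') z = 0)"
  have "y' - y \<in> K" using K y y' by (simp add: hsubspace_diff)
  have "ip (y' - y) (y' - y) = ip (x - y) (y' - y) - ip (x - y') (y' - y)"
    by (simp add: ip_diff_left[symmetric])
  also have "\<dots> = 0" using y y' \<open>y' - y \<in> K\<close> by simp
  finally have "ip (y' - y) (y' - y) = 0" .
  thus "y' = y" by (simp add: ip_self_eq_0_iff)
qed (use y in simp)

lemma orth_proj:
  assumes K: "hsubspace H K" and closed: "hclosure H K \<subseteq> K"
  shows "orth_proj H K x \<in> K" "\<forall>z\<in>K. ip (x - orth_proj H K x) z = 0"
proof -
  obtain y where "y \<in> K" "\<forall>z\<in>K. ip (x - y) z = 0"
    using orthogonal_decomposition_exists[OF K closed] by blast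
  moreover from this have "orth_proj H K x = y" by (rule orth_proj_eqI[OF K])
  ultimately show "orth_proj H K x \<in> K" "\<forall>z\<in>K. ip (x - orth_proj H K x) z = 0" by auto
qed

lemma bop_in: "bop H K C \<Longrightarrow> x \<in> K \<Longrightarrow> C x \<in> K" by (simp add: bop_def)
lemma bop_add: "bop H K C \<Longrightarrow> x \<in> K \<Longrightarrow> y \<in> K \<Longrightarrow> C (x + y) = C x + C y" by (simp add: bop_def)
lemma bop_scale: "bop H K C \<Longrightarrow> x \<in> K \<Longrightarrow> C (sm c x) = sm c (C x)" by (simp add: bop_def)
lemma bop_outside: "bop H K C \<Longrightarrow> x \<notin> K \<Longrightarrow> C x = 0" by (simp add: bop_def)

lemma bop_bound: "bop H K C \<Longrightarrow> \<exists>B\<ge>0. \<forall>x\<in>K. nm (C x) \<le> B * nm x"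
proof -
  assume "bop H K C"
  then obtain B where B: "\<forall>x\<in>K. nm (C x) \<le> B * nm x" by (auto simp: bop_def)
  have "\<forall>x\<in>K. nm (C x) \<le> max B 0 * nm x"
    using B by (metis max.cobounded1 mult_right_mono nm_nonneg order_trans)
  thus ?thesis by (intro exI[of _ "max B 0"]) auto
qed

lemma bop_approx:
  assumes "bop H K C" "e > 0"
  shows "\<exists>\<delta>>0. \<forall>x\<in>K. nm x < \<delta> \<longrightarrow> nm (C x) < e"
proof -
  obtain B where B: "B \<ge> 0" "\<forall>x\<in>K. nm (C x) \<le> B * nm x" using bop_bound[OF assms(1)] by blast
  have "nm (C x) < e" if "x \<in> K" "nm x < e / (B + 1)" for x
  proof -
    have "nm (C x) \<le> B * nm x" using B that(1) by blast
    also have "\<dots> \<le> (B + 1) * nm x" by (simp add: mult_right_mono)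
    also have "\<dots> < e" using that(2) B by (simp add: field_simps)
    finally show ?thesis .
  qed
  thus ?thesis using assms(2) B(1) by (intro exI[of _ "e / (B + 1)"]) auto
qed

lemma bopI:
  assumes "\<And>x y. f (x + y) = f x + f y" "\<And>c x. f (sm c x) = sm c (f x)" "\<And>x. nm (f x) \<le> B * nm x"
  shows "bop H UNIV f"
  unfolding bop_def using assms by blast

lemma bop_UNIV:
  assumes "bop H UNIV C"
  shows "C (x + y) = C x + C y" "C (sm c x) = sm c (C x)" "C 0 = 0" "C (- x) = - C x"
    "C (x - y) = C x - C y"
proof -
  show add: "C (x + y) = C x + C y" for x y using bop_add[OF assms] by simp
  show scale: "C (sm c x) = sm c (C x)" for c x using bop_scale[OF assms] by simp
  show "C 0 = 0" using add[of 0 0] by simp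
  show minus: "C (- x) = - C x" for x using scale[of "-1" x] by simp
  show "C (x - y) = C x - C y" using add[of x "- y"] minus[of y] by simp
qed

lemma bop_comp:
  assumes C1: "bop H UNIV C1" and C2: "bop H UNIV C2"
  shows "bop H UNIV (\<lambda>x. C1 (C2 x))"
proof -
  obtain B1 where B1: "B1 \<ge> 0" "\<forall>x. nm (C1 x) \<le> B1 * nm x" using bop_bound[OF C1] by auto
  obtain B2 where B2: "B2 \<ge> 0" "\<forall>x. nm (C2 x) \<le> B2 * nm x" using bop_bound[OF C2] by auto
  show ?thesis
  proof (rule bopI[where B="B1 * B2"])
    fix x
    have "nm (C1 (C2 x)) \<le> B1 * nm (C2 x)" using B1 by simp
    also have "\<dots> \<le> B1 * (B2 * nm x)" using B1 B2 by (intro mult_left_mono) auto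
    finally show "nm (C1 (C2 x)) \<le> B1 * B2 * nm x" by (simp add: mult_ac)
  qed (simp_all add: bop_UNIV[OF C1] bop_UNIV[OF C2])
qed

lemma bop_sm: "bop H UNIV (sm c)"
  by (rule bopI[where B = "cmod c"]) (simp_all add: vs.scale_right_distrib nm_scale mult.commute)

lemma bounded_functional_kernel_closed:
  assumes add: "\<forall>x y. f (x + y) = f x + f y" and bd: "\<forall>x. cmod (f x) \<le> B * nm x"
  shows "hclosure H {x. f x = 0} \<subseteq> {x. f x = 0}"
proof
  fix x assume x: "x \<in> hclosure H {x. f x = 0}"
  have "cmod (f x) \<le> 0"
  proof (rule field_le_epsilon)
    fix e :: real assume e: "e > 0"
    have p: "\<bar>B\<bar> + 1 > 0" by simp
    have "e / (\<bar>B\<bar> + 1) > 0" using e p by simp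
    then obtain k where k: "f k = 0" "nm (x - k) < e / (\<bar>B\<bar> + 1)"
      using hclosureD[OF x] by blast
    have "f x = f (x - k) + f k" using add by (metis diff_add_cancel)
    hence "cmod (f x) \<le> B * nm (x - k)" using k(1) bd by simp
    also have "\<dots> \<le> \<bar>B\<bar> * nm (x - k)" by (simp add: mult_right_mono)
    also have "\<dots> \<le> (\<bar>B\<bar> + 1) * (e / (\<bar>B\<bar> + 1))" using k(2) by (intro mult_mono) auto
    finally show "cmod (f x) \<le> 0 + e" using p by simp
  qed
  thus "x \<in> {x. f x = 0}" by simp
qed

lemma riesz_representation:
  assumes add: "\<forall>x y. f (x + y) = f x + f y" and scale: "\<forall>c x. f (sm c x) = c * f x"
    and bd: "\<forall>x. cmod (f x) \<le> B * nm x"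
  shows "\<exists>z. \<forall>x. f x = ip x z"
proof (cases "\<forall>x. f x = 0")
  case True then show ?thesis by (intro exI[of _ 0]) simp
next
  case False
  then obtain x0 where x0: "f x0 \<noteq> 0" by blast
  have f0: "f 0 = 0" using add by (metis add_cancel_right_right add_0)
  have f_diff: "f (x - y) = f x - f y" for x y using add by (metis diff_add_cancel eq_diff_eq)
  define K where "K = {x. f x = 0}"
  have K: "hsubspace H K" unfolding hsubspace_def K_def using f0 add scale by simp
  have closed: "hclosure H K \<subseteq> K"
    unfolding K_def by (rule bounded_functional_kernel_closed[OF add bd])
  \<comment> \<open>the component of \<open>x0\<close> orthogonal to the kernel spans its complement\<close>
  define u where "u = x0 - orth_proj H K x0"
  have u_orth: "\<forall>z\<in>K. ip u z = 0" using orth_proj[OF K closed] by (simp add: u_def)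
  have fu: "f u = f x0" using orth_proj(1)[OF K closed] by (simp add: u_def f_diff K_def)
  hence "u \<noteq> 0" using x0 f0 by auto
  hence uu: "ip u u \<noteq> 0" by (simp add: ip_self_eq_0_iff)
  have "f x = ip x (sm (cnj (f u / ip u u)) u)" for x
  proof -
    have "f (x - sm (f x / f u) u) = 0" using fu x0 by (simp add: f_diff scale)
    hence "ip (x - sm (f x / f u) u) u = 0" using u_orth ip_eq_zero_sym by (simp add: K_def)
    hence "ip x u = (f x / f u) * ip u u" by (simp add: ip_diff_left ip_scale_left)
    thus ?thesis using uu fu x0 by (simp add: ip_scale_right field_simps)
  qed
  thus ?thesis by blast
qed

lemma bop_adjoint_exists:
  assumes C: "bop H UNIV C"
  shows "\<exists>C'. bop H UNIV C' \<and> (\<forall>x y. ip (C x) y = ip x (C' y))"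
proof -
  obtain B where B: "B \<ge> 0" "\<forall>x. nm (C x) \<le> B * nm x" using bop_bound[OF C] by auto
  have "\<exists>z. \<forall>x. ip (C x) y = ip x z" for y
  proof (rule riesz_representation[where B = "B * nm y"])
    show "\<forall>x. cmod (ip (C x) y) \<le> B * nm y * nm x"
    proof
      fix x
      have "cmod (ip (C x) y) \<le> (B * nm x) * nm y" using B by (intro ip_bound) auto
      thus "cmod (ip (C x) y) \<le> B * nm y * nm x" by (simp add: mult_ac)
    qed
  qed (simp_all add: bop_UNIV[OF C] ip_add_left ip_scale_left)
  then obtain C' where C': "\<And>x y. ip (C x) y = ip x (C' y)" by metis
  have "nm (C' y) \<le> B * nm y" for y
  proof -
    have "(nm (C' y))^2 \<le> cmod (ip (C (C' y)) y)" by (simp add: nm_sq C' complex_Re_le_cmod)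
    also have "\<dots> \<le> (B * nm (C' y)) * nm y" using B by (intro ip_bound) auto
    finally have "nm (C' y) * nm (C' y) \<le> (B * nm y) * nm (C' y)"
      by (simp add: power2_eq_square mult_ac)
    thus ?thesis using B by (cases "nm (C' y) = 0") (simp_all add: less_le)
  qed
  moreover have "C' (y1 + y2) = C' y1 + C' y2" for y1 y2
    by (rule ip_eqI_right) (simp add: C'[symmetric] ip_add_right)
  moreover have "C' (sm c y) = sm c (C' y)" for c y
    by (rule ip_eqI_right) (simp add: C'[symmetric] ip_scale_right)
  ultimately have "bop H UNIV C'" by (intro bopI) auto
  thus ?thesis using C' by blast
qed

lemma ip_identity_limit:
  assumes approx1: "\<And>e. e > 0 \<Longrightarrow> \<exists>(a, b)\<in>P. nm (a - x1) < e \<and> nm (b - y1) < e"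
    and approx2: "\<And>e. e > 0 \<Longrightarrow> \<exists>(c, d)\<in>Q. nm (c - x2) < e \<and> nm (d - y2) < e"
    and identity: "\<And>a b c d. (a, b) \<in> P \<Longrightarrow> (c, d) \<in> Q \<Longrightarrow> ip a c = ip b d"
  shows "ip x1 x2 = ip y1 y2"
proof -
  define K where "K = nm x1 + nm x2 + nm y1 + nm y2 + 2"
  have K: "K > 0" by (simp add: K_def add_nonneg_pos)
  have bound: "cmod (ip x1 x2 - ip y1 y2) \<le> e * K" if e: "0 < e" "e \<le> 1" for e
  proof -
    obtain a b c d where ab: "(a, b) \<in> P" "nm (a - x1) < e" "nm (b - y1) < e"
      and cd: "(c, d) \<in> Q" "nm (c - x2) < e" "nm (d - y2) < e"
      using approx1[OF e(1)] approx2[OF e(1)] by blast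
    have "nm a \<le> nm x1 + 1" "nm d \<le> nm y2 + 1"
      using nm_triangle[of "a - x1" x1] nm_triangle[of "d - y2" y2] ab cd e(2) by auto
    hence "cmod (ip (x1 - a) x2) \<le> e * nm x2" "cmod (ip a (x2 - c)) \<le> (nm x1 + 1) * e"
      "cmod (ip (b - y1) d) \<le> e * (nm y2 + 1)" "cmod (ip y1 (d - y2)) \<le> nm y1 * e"
      using ab cd nm_commute[of x1 a] nm_commute[of x2 c] by (auto intro!: ip_bound)
    moreover have "ip x1 x2 - ip y1 y2 = ip (x1 - a) x2 + ip a (x2 - c) + ip (b - y1) d + ip y1 (d - y2)"
      using identity[OF ab(1) cd(1)] by (simp add: ip_diff_left ip_diff_right)
    ultimately show ?thesis
      using norm_triangle_ineq[of "ip (x1 - a) x2 + ip a (x2 - c) + ip (b - y1) d" "ip y1 (d - y2)"]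
        norm_triangle_ineq[of "ip (x1 - a) x2 + ip a (x2 - c)" "ip (b - y1) d"]
        norm_triangle_ineq[of "ip (x1 - a) x2" "ip a (x2 - c)"]
      by (simp add: K_def algebra_simps)
  qed
  have "cmod (ip x1 x2 - ip y1 y2) \<le> 0"
  proof (rule field_le_epsilon)
    fix e :: real assume "e > 0"
    hence "cmod (ip x1 x2 - ip y1 y2) \<le> min 1 (e / K) * K" using K by (intro bound) auto
    also have "\<dots> \<le> e" using K by (simp add: min_def field_simps)
    finally show "cmod (ip x1 x2 - ip y1 y2) \<le> 0 + e" by simp
  qed
  thus ?thesis by simp
qed

section \<open>Operators on a dense domain\<close>

definition dense_domain :: "'a set \<Rightarrow> 'a set \<Rightarrow> bool" where
  "dense_domain K D0 \<longleftrightarrow> hsubspace H K \<and> hsubspace H D0 \<and> D0 \<subseteq> K \<and>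
     (\<forall>x\<in>K. \<forall>e>0. \<exists>d\<in>D0. nm (x - d) < e)"

lemma orthogonal_to_dense_zero:
  assumes dense: "dense_domain K D0" and z: "z \<in> K" and orth: "\<forall>d\<in>D0. ip d z = 0"
  shows "z = 0"
proof (rule ccontr)
  assume "z \<noteq> 0"
  hence p: "nm z > 0" by (rule nm_pos)
  obtain d where d: "d \<in> D0" "nm (z - d) < nm z / 2"
    using dense z p unfolding dense_domain_def by (metis half_gt_zero)
  have "ip z z = ip (z - d) z" using orth d(1) by (simp add: ip_diff_left)
  moreover have "cmod (ip z z) = nm z * nm z"
    by (simp add: ip_self_nm power2_eq_square abs_of_nonneg del: of_real_mult)
  ultimately have "nm z * nm z \<le> nm (z - d) * nm z" using cauchy_schwarz[of "z - d" z] by simp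
  also have "\<dots> \<le> nm z / 2 * nm z" using d(2) p by (intro mult_right_mono) auto
  finally show False using p by simp
qed

lemma ldag_in: "ldag H D0 X \<Longrightarrow> x \<in> D0 \<Longrightarrow> X x \<in> D0" by (simp add: ldag_def)
lemma ldag_add: "ldag H D0 X \<Longrightarrow> x \<in> D0 \<Longrightarrow> y \<in> D0 \<Longrightarrow> X (x + y) = X x + X y"
  by (simp add: ldag_def)
lemma ldag_scale: "ldag H D0 X \<Longrightarrow> x \<in> D0 \<Longrightarrow> X (sm c x) = sm c (X x)" by (simp add: ldag_def)
lemma ldag_outside: "ldag H D0 X \<Longrightarrow> x \<notin> D0 \<Longrightarrow> X x = 0" by (simp add: ldag_def)
lemma ldag_zero: "ldag H D0 X \<Longrightarrow> hsubspace H D0 \<Longrightarrow> X 0 = 0"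
  by (metis add_cancel_right_right ldag_add hsubspace_0 add_0)
lemma ldag_diff:
  assumes X: "ldag H D0 X" and "hsubspace H D0" "x \<in> D0" "y \<in> D0"
  shows "X (x - y) = X x - X y"
proof -
  have "X (- y) = - X y" using ldag_scale[OF X, of y "-1"] assms by simp
  moreover have "X (x + - y) = X x + X (- y)"
    using assms by (simp add: ldag_add hsubspace_minus del: add_uminus_conv_diff)
  ultimately show ?thesis by simp
qed

lemma dag_eqI:
  assumes dense: "dense_domain K D0" and "\<eta> \<in> D0" "\<zeta> \<in> D0"
    and adj: "\<And>\<xi>. \<xi> \<in> D0 \<Longrightarrow> ip (X \<xi>) \<eta> = ip \<xi> \<zeta>"
  shows "dag H D0 X \<eta> = \<zeta>"
proof -
  have "(THE \<zeta>. \<zeta> \<in> D0 \<and> (\<forall>\<xi>\<in>D0. ip (X \<xi>) \<eta> = ip \<xi> \<zeta>)) = \<zeta>"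
  proof (rule the_equality)
    fix z assume z: "z \<in> D0 \<and> (\<forall>\<xi>\<in>D0. ip (X \<xi>) \<eta> = ip \<xi> z)"
    have "z - \<zeta> = 0"
    proof (rule orthogonal_to_dense_zero[OF dense])
      have "hsubspace H K" "D0 \<subseteq> K" using dense by (simp_all add: dense_domain_def)
      thus "z - \<zeta> \<in> K" using z \<open>\<zeta> \<in> D0\<close> by (auto intro: hsubspace_diff)
      show "\<forall>d\<in>D0. ip d (z - \<zeta>) = 0" using z adj by (simp add: ip_diff_right)
    qed
    thus "z = \<zeta>" by simp
  qed (use assms in auto)
  thus ?thesis using assms(2) by (simp add: dag_def)
qed

lemma
  assumes dense: "dense_domain K D0" and X: "ldag H D0 X" and \<eta>: "\<eta> \<in> D0"
  shows dag_in: "dag H D0 X \<eta> \<in> D0"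
    and dag_adjoint: "\<xi> \<in> D0 \<Longrightarrow> ip (X \<xi>) \<eta> = ip \<xi> (dag H D0 X \<eta>)"
proof -
  obtain \<zeta> where \<zeta>: "\<zeta> \<in> D0" "\<forall>\<xi>\<in>D0. ip (X \<xi>) \<eta> = ip \<xi> \<zeta>"
    using X \<eta> unfolding ldag_def by blast
  moreover have "dag H D0 X \<eta> = \<zeta>" using \<zeta>(2) by (intro dag_eqI[OF dense \<eta> \<zeta>(1)]) blast
  ultimately show "dag H D0 X \<eta> \<in> D0" "\<xi> \<in> D0 \<Longrightarrow> ip (X \<xi>) \<eta> = ip \<xi> (dag H D0 X \<eta>)" by auto
qed

lemma dag_outside: "\<eta> \<notin> D0 \<Longrightarrow> dag H D0 X \<eta> = 0"
  by (simp add: dag_def)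

lemma
  assumes dense: "dense_domain K D0" and X: "ldag H D0 X"
  shows ldag_dag: "ldag H D0 (dag H D0 X)"
    and dag_dag: "\<eta> \<in> D0 \<Longrightarrow> dag H D0 (dag H D0 X) \<eta> = X \<eta>"
proof -
  have sub: "hsubspace H D0" using dense by (simp add: dense_domain_def)
  note dg = dag_in[OF dense X] dag_adjoint[OF dense X]
  have adj: "ip (dag H D0 X \<xi>) \<eta> = ip \<xi> (X \<eta>)" if "\<xi> \<in> D0" "\<eta> \<in> D0" for \<xi> \<eta>
    by (metis dg(2) ip_sym that)
  show "ldag H D0 (dag H D0 X)"
    unfolding ldag_def
  proof (intro conjI ballI allI impI)
    fix x y assume xy: "x \<in> D0" "y \<in> D0"
    show "dag H D0 X (x + y) = dag H D0 X x + dag H D0 X y"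
      by (rule dag_eqI[OF dense]) (use xy sub dg in \<open>auto simp: hsubspace_add ip_add_right\<close>)
  next
    fix c x assume x: "x \<in> D0"
    show "dag H D0 X (sm c x) = sm c (dag H D0 X x)"
      by (rule dag_eqI[OF dense]) (use x sub dg in \<open>auto simp: hsubspace_scale ip_scale_right\<close>)
  next
    fix \<eta> assume "\<eta> \<in> D0"
    thus "\<exists>\<zeta>\<in>D0. \<forall>\<xi>\<in>D0. ip (dag H D0 X \<xi>) \<eta> = ip \<xi> \<zeta>"
      using adj ldag_in[OF X] by blast
  qed (simp_all add: dg(1) dag_outside)
  show "\<eta> \<in> D0 \<Longrightarrow> dag H D0 (dag H D0 X) \<eta> = X \<eta>"
    using adj ldag_in[OF X] by (intro dag_eqI[OF dense]) auto
qed

lemma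
  assumes dense: "dense_domain K D0" and X1: "ldag H D0 X1" and X2: "ldag H D0 X2"
  shows ldag_comp: "ldag H D0 (X1 \<circ> X2)"
    and dag_comp: "\<eta> \<in> D0 \<Longrightarrow> dag H D0 (X1 \<circ> X2) \<eta> = dag H D0 X2 (dag H D0 X1 \<eta>)"
proof -
  have sub: "hsubspace H D0" using dense by (simp add: dense_domain_def)
  have adj: "ip ((X1 \<circ> X2) \<xi>) \<eta> = ip \<xi> (dag H D0 X2 (dag H D0 X1 \<eta>))" if "\<xi> \<in> D0" "\<eta> \<in> D0" for \<xi> \<eta>
    using dag_adjoint[OF dense X1] dag_adjoint[OF dense X2] dag_in[OF dense X1] ldag_in[OF X2] that
    by simp
  have dd: "dag H D0 X2 (dag H D0 X1 \<eta>) \<in> D0" if "\<eta> \<in> D0" for \<eta>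
    using dag_in[OF dense X1] dag_in[OF dense X2] that by blast
  show "ldag H D0 (X1 \<circ> X2)"
    unfolding ldag_def
  proof (intro conjI ballI allI impI)
    fix x y assume xy: "x \<in> D0" "y \<in> D0"
    show "(X1 \<circ> X2) (x + y) = (X1 \<circ> X2) x + (X1 \<circ> X2) y"
      using ldag_add[OF X2 xy] ldag_add[OF X1 ldag_in[OF X2 xy(1)] ldag_in[OF X2 xy(2)]] by simp
  next
    fix c x assume x: "x \<in> D0"
    show "(X1 \<circ> X2) (sm c x) = sm c ((X1 \<circ> X2) x)"
      using ldag_scale[OF X2 x] ldag_scale[OF X1 ldag_in[OF X2 x]] by simp
  next
    fix \<eta> assume "\<eta> \<in> D0"
    thus "\<exists>\<zeta>\<in>D0. \<forall>\<xi>\<in>D0. ip ((X1 \<circ> X2) \<xi>) \<eta> = ip \<xi> \<zeta>"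
      using adj dd by blast
  qed (simp_all add: ldag_in X1 X2 ldag_outside[OF X2] ldag_zero[OF X1 sub])
  show "\<eta> \<in> D0 \<Longrightarrow> dag H D0 (X1 \<circ> X2) \<eta> = dag H D0 X2 (dag H D0 X1 \<eta>)"
    using adj dd by (intro dag_eqI[OF dense]) auto
qed

lemma bicommD:
  "X \<in> bicomm H K D0 N \<Longrightarrow> C \<in> wcomm H K D0 N \<Longrightarrow> \<xi> \<in> D0 \<Longrightarrow> \<eta> \<in> D0 \<Longrightarrow>
    ip (C (X \<xi>)) \<eta> = ip (C \<xi>) (dag H D0 X \<eta>)"
  by (simp add: bicomm_def)
lemma bicomm_ldag: "X \<in> bicomm H K D0 N \<Longrightarrow> ldag H D0 X"
  by (simp add: bicomm_def)
lemma wcommD: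
  "C \<in> wcomm H K D0 N \<Longrightarrow> X \<in> N \<Longrightarrow> \<xi> \<in> D0 \<Longrightarrow> \<eta> \<in> D0 \<Longrightarrow>
    ip (C (X \<xi>)) \<eta> = ip (C \<xi>) (dag H D0 X \<eta>)"
  by (simp add: wcomm_def)
lemma wcomm_bop: "C \<in> wcomm H K D0 N \<Longrightarrow> bop H K C"
  by (simp add: wcomm_def)

lemma bicomm_comp:
  assumes dense: "dense_domain K D0" and X1: "X1 \<in> bicomm H K D0 N" and X2: "X2 \<in> bicomm H K D0 N"
  shows "X1 \<circ> X2 \<in> bicomm H K D0 N"
  unfolding bicomm_def
proof (intro CollectI conjI ballI)
  note l1 = bicomm_ldag[OF X1] and l2 = bicomm_ldag[OF X2]
  show "ldag H D0 (X1 \<circ> X2)" by (rule ldag_comp[OF dense l1 l2])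
  fix C \<xi> \<eta> assume C: "C \<in> wcomm H K D0 N" and \<xi>: "\<xi> \<in> D0" and \<eta>: "\<eta> \<in> D0"
  have "ip (C (X1 (X2 \<xi>))) \<eta> = ip (C (X2 \<xi>)) (dag H D0 X1 \<eta>)"
    by (rule bicommD[OF X1 C ldag_in[OF l2 \<xi>] \<eta>])
  also have "\<dots> = ip (C \<xi>) (dag H D0 X2 (dag H D0 X1 \<eta>))"
    by (rule bicommD[OF X2 C \<xi> dag_in[OF dense l1 \<eta>]])
  finally show "ip (C ((X1 \<circ> X2) \<xi>)) \<eta> = ip (C \<xi>) (dag H D0 (X1 \<circ> X2) \<eta>)"
    using dag_comp[OF dense l1 l2 \<eta>] by simp
qed

lemma bicomm_dag:
  assumes dense: "dense_domain K D0" and X: "X \<in> bicomm H K D0 N"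
    and adjoints: "\<And>C. C \<in> wcomm H K D0 N \<Longrightarrow> \<exists>C'\<in>wcomm H K D0 N. \<forall>a\<in>K. \<forall>b\<in>K. ip (C a) b = ip a (C' b)"
  shows "dag H D0 X \<in> bicomm H K D0 N"
  unfolding bicomm_def
proof (intro CollectI conjI ballI)
  note l = bicomm_ldag[OF X]
  have sub: "D0 \<subseteq> K" using dense by (simp add: dense_domain_def)
  show "ldag H D0 (dag H D0 X)" by (rule ldag_dag[OF dense l])
  fix C \<xi> \<eta> assume C: "C \<in> wcomm H K D0 N" and \<xi>: "\<xi> \<in> D0" and \<eta>: "\<eta> \<in> D0"
  obtain C' where C': "C' \<in> wcomm H K D0 N" "\<forall>a\<in>K. \<forall>b\<in>K. ip (C a) b = ip a (C' b)"
    using adjoints[OF C] by blast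
  have X\<xi>: "dag H D0 X \<xi> \<in> D0" and X\<eta>: "X \<eta> \<in> D0" using dag_in[OF dense l \<xi>] ldag_in[OF l \<eta>] .
  have "ip (C (dag H D0 X \<xi>)) \<eta> = ip (dag H D0 X \<xi>) (C' \<eta>)"
    using C'(2) X\<xi> \<eta> sub by blast
  also have "\<dots> = cnj (ip (C' \<eta>) (dag H D0 X \<xi>))" by (rule ip_sym)
  also have "ip (C' \<eta>) (dag H D0 X \<xi>) = ip (C' (X \<eta>)) \<xi>"
    by (rule bicommD[OF X C'(1) \<eta> \<xi>, symmetric])
  also have "\<dots> = cnj (ip \<xi> (C' (X \<eta>)))" by (rule ip_sym)
  also have "ip \<xi> (C' (X \<eta>)) = ip (C \<xi>) (X \<eta>)"
    using C'(2) \<xi> X\<eta> sub by (metis subsetD)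
  finally show "ip (C (dag H D0 X \<xi>)) \<eta> = ip (C \<xi>) (dag H D0 (dag H D0 X) \<eta>)"
    using dag_dag[OF dense l \<eta>] by simp
qed

lemma wcomm_adjoint:
  assumes dense: "dense_domain K D0" and C: "C \<in> wcomm H K D0 N" and C': "bop H K C'"
    and adj: "\<forall>a\<in>K. \<forall>b\<in>K. ip (C a) b = ip a (C' b)"
    and N_ldag: "\<And>A. A \<in> N \<Longrightarrow> ldag H D0 A" and N_dag: "\<And>A. A \<in> N \<Longrightarrow> dag H D0 A \<in> N"
  shows "C' \<in> wcomm H K D0 N"
  unfolding wcomm_def
proof (intro CollectI conjI ballI)
  show "bop H K C'" by (rule C')
  fix A a b assume A: "A \<in> N" and a: "a \<in> D0" and b: "b \<in> D0"
  have sub: "D0 \<subseteq> K" using dense by (simp add: dense_domain_def)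
  note lA = N_ldag[OF A]
  have Ab: "dag H D0 A b \<in> D0" and Aa: "A a \<in> D0" using dag_in[OF dense lA b] ldag_in[OF lA a] .
  have "ip (C' (A a)) b = cnj (ip b (C' (A a)))" by (rule ip_sym)
  also have "ip b (C' (A a)) = ip (C b) (A a)" using adj b Aa sub by (metis subsetD)
  also have "\<dots> = ip (C b) (dag H D0 (dag H D0 A) a)" using dag_dag[OF dense lA a] by simp
  also have "\<dots> = ip (C (dag H D0 A b)) a" by (rule wcommD[OF C N_dag[OF A] b a, symmetric])
  also have "\<dots> = ip (dag H D0 A b) (C' a)" using adj Ab a sub by (metis subsetD)
  also have "cnj \<dots> = ip (C' a) (dag H D0 A b)" by (rule ip_sym[symmetric])
  finally show "ip (C' (A a)) b = ip (C' a) (dag H D0 A b)" .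
qed

end

section \<open>The reduced algebra\<close>

locale reduced_ostar_algebra = hilbert_space H for H :: "('a::ab_group_add) hs" +
  fixes D :: "'a set" and M :: "('a \<Rightarrow> 'a) set" and E :: "'a \<Rightarrow> 'a"
  assumes D_subspace: "hsubspace H D" and D_dense: "hclosure H D = UNIV"
    and M_ostar: "ostar_alg H D M"
    and Mw_maps_D: "\<forall>C\<in>wcomm H UNIV D M. C ` D \<subseteq> D"
    and E_Mw: "E \<in> wcomm H UNIV D M" and E_projection: "is_projection H UNIV E"
begin

text \<open>In the notation of the statement, \<open>Mw\<close>, \<open>Mwc\<close>, \<open>ME\<close>, \<open>MEw\<close> and \<open>MEwc\<close> are \<open>\<M>'\<^sub>w\<close>,
  \<open>\<M>''\<^sub>w\<^sub>c\<close>, \<open>\<M>\<^sub>E\<^sub>'\<close>, \<open>(\<M>\<^sub>E\<^sub>')'\<^sub>w\<close> and \<open>(\<M>\<^sub>E\<^sub>')''\<^sub>w\<^sub>c\<close>.\<close>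

abbreviation "Mw \<equiv> wcomm H UNIV D M"
abbreviation "Mwc \<equiv> bicomm H UNIV D M"
abbreviation "EH \<equiv> range E"
abbreviation "ED \<equiv> E ` D"
abbreviation "ME \<equiv> reduce E D M"
abbreviation "MEw \<equiv> wcomm H EH ED ME"
abbreviation "MEwc \<equiv> bicomm H EH ED ME"

lemma M_ldag: "A \<in> M \<Longrightarrow> ldag H D A" using M_ostar by (simp add: ostar_alg_def)
lemma M_dag: "A \<in> M \<Longrightarrow> dag H D A \<in> M" using M_ostar by (simp add: ostar_alg_def)
lemma M_idop: "idop D \<in> M" using M_ostar by (simp add: ostar_alg_def)
lemma Mw_D: "C \<in> Mw \<Longrightarrow> x \<in> D \<Longrightarrow> C x \<in> D" using Mw_maps_D by blast

lemma D_dense_domain: "dense_domain UNIV D"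
  unfolding dense_domain_def using D_subspace D_dense hsubspace_UNIV by (auto dest: hclosureD)

lemma E_bop: "bop H UNIV E" using E_projection by (simp add: is_projection_def)
lemma E_idem: "E (E x) = E x" using E_projection by (simp add: is_projection_def)
lemma E_selfadjoint: "ip (E x) y = ip x (E y)" using E_projection by (simp add: is_projection_def)
lemmas E_linear = bop_UNIV[OF E_bop]

lemma EH_iff: "x \<in> EH \<longleftrightarrow> E x = x"
  by (metis E_idem rangeE rangeI)
lemma ip_E_left: "y \<in> EH \<Longrightarrow> ip (E x) y = ip x y"
  by (simp add: E_selfadjoint EH_iff)
lemma ip_E_right: "x \<in> EH \<Longrightarrow> ip x (E y) = ip x y"
  by (metis E_selfadjoint EH_iff)
lemma ED_subset_D: "ED \<subseteq> D" using Mw_maps_D E_Mw by blast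
lemma E_ED: "x \<in> ED \<Longrightarrow> E x = x" using EH_iff by blast

lemma ED_dense_domain: "dense_domain EH ED"
  unfolding dense_domain_def
proof (intro conjI ballI allI impI)
  show "hsubspace H EH" unfolding hsubspace_def EH_iff by (simp add: E_linear E_idem)
  show "hsubspace H ED"
    unfolding hsubspace_def
  proof (intro conjI ballI allI)
    show "0 \<in> ED" using hsubspace_0[OF D_subspace] E_linear(3) by (metis imageI)
    fix x y assume "x \<in> ED" "y \<in> ED"
    then obtain a b where "a \<in> D" "b \<in> D" "x = E a" "y = E b" by blast
    thus "x + y \<in> ED" using hsubspace_add[OF D_subspace] E_linear(1) by (metis imageI)
  next
    fix c x assume "x \<in> ED"
    then obtain a where "a \<in> D" "x = E a" by blast
    thus "sm c x \<in> ED" using hsubspace_scale[OF D_subspace] E_linear(2) by (metis imageI)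
  qed
  show "ED \<subseteq> EH" by auto
  fix x e assume x: "x \<in> EH" and e: "(e::real) > 0"
  obtain \<delta> where \<delta>: "\<delta> > 0" "\<forall>y. nm y < \<delta> \<longrightarrow> nm (E y) < e" using bop_approx[OF E_bop e] by auto
  obtain d where d: "d \<in> D" "nm (x - d) < \<delta>" using D_dense_domain \<delta>(1) unfolding dense_domain_def by blast
  have "nm (x - E d) = nm (E (x - d))" using x by (simp add: E_linear EH_iff)
  also have "\<dots> < e" using d(2) \<delta>(2) by blast
  finally show "\<exists>d\<in>ED. nm (x - d) < e" using d(1) by blast
qed

lemma weak_commute_imp_commute:
  assumes C: "bop H UNIV C" and CD: "\<And>x. x \<in> D \<Longrightarrow> C x \<in> D" and X: "ldag H D X"
    and weak: "\<And>\<xi> \<eta>. \<xi> \<in> D \<Longrightarrow> \<eta> \<in> D \<Longrightarrow> ip (C (X \<xi>)) \<eta> = ip (C \<xi>) (dag H D X \<eta>)"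
    and \<xi>: "\<xi> \<in> D"
  shows "C (X \<xi>) = X (C \<xi>)"
proof -
  have "C (X \<xi>) - X (C \<xi>) = 0"
  proof (rule orthogonal_to_dense_zero[OF D_dense_domain])
    show "\<forall>d\<in>D. ip d (C (X \<xi>) - X (C \<xi>)) = 0"
      using weak[OF \<xi>] dag_adjoint[OF D_dense_domain X _ CD[OF \<xi>]]
      by (simp add: ip_eq_zero_sym[of _ "C (X \<xi>) - X (C \<xi>)"] ip_diff_left)
  qed simp
  thus ?thesis by simp
qed

lemma Mw_commute_M: "C \<in> Mw \<Longrightarrow> A \<in> M \<Longrightarrow> \<xi> \<in> D \<Longrightarrow> C (A \<xi>) = A (C \<xi>)"
  by (rule weak_commute_imp_commute) (auto simp: wcomm_bop Mw_D M_ldag wcommD)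
lemma Mw_commute_Mwc: "C \<in> Mw \<Longrightarrow> Y \<in> Mwc \<Longrightarrow> \<xi> \<in> D \<Longrightarrow> C (Y \<xi>) = Y (C \<xi>)"
  by (rule weak_commute_imp_commute) (auto simp: wcomm_bop Mw_D bicomm_ldag bicommD)

lemma Mw_id: "(\<lambda>x. x) \<in> Mw"
  unfolding wcomm_def
proof (intro CollectI conjI ballI)
  show "bop H UNIV (\<lambda>x. x)" by (rule bopI[where B=1]) auto
  fix A \<xi> \<eta> assume "A \<in> M" "\<xi> \<in> D" "\<eta> \<in> D"
  thus "ip (A \<xi>) \<eta> = ip \<xi> (dag H D A \<eta>)" using dag_adjoint[OF D_dense_domain M_ldag] by blast
qed

lemma Mw_comp: assumes C1: "C1 \<in> Mw" and C2: "C2 \<in> Mw" shows "(\<lambda>x. C1 (C2 x)) \<in> Mw"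
  unfolding wcomm_def
proof (intro CollectI conjI ballI)
  show "bop H UNIV (\<lambda>x. C1 (C2 x))" by (rule bop_comp[OF wcomm_bop[OF C1] wcomm_bop[OF C2]])
  fix A \<xi> \<eta> assume A: "A \<in> M" and \<xi>: "\<xi> \<in> D" and \<eta>: "\<eta> \<in> D"
  show "ip (C1 (C2 (A \<xi>))) \<eta> = ip (C1 (C2 \<xi>)) (dag H D A \<eta>)"
    using wcommD[OF C1 A Mw_D[OF C2 \<xi>] \<eta>] Mw_commute_M[OF C2 A \<xi>] by simp
qed

lemma Mw_scale: assumes C: "C \<in> Mw" shows "(\<lambda>x. sm c (C x)) \<in> Mw"
  unfolding wcomm_def
proof (intro CollectI conjI ballI)
  show "bop H UNIV (\<lambda>x. sm c (C x))" by (rule bop_comp[OF bop_sm wcomm_bop[OF C]])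
  fix A \<xi> \<eta> assume A: "A \<in> M" and \<xi>: "\<xi> \<in> D" and \<eta>: "\<eta> \<in> D"
  show "ip (sm c (C (A \<xi>))) \<eta> = ip (sm c (C \<xi>)) (dag H D A \<eta>)"
    using wcommD[OF C A \<xi> \<eta>] by (simp add: ip_scale_left)
qed

lemma Mw_minus: "C \<in> Mw \<Longrightarrow> (\<lambda>x. - C x) \<in> Mw"
  using Mw_scale[of C "-1"] by simp

lemma Mw_adjoint: assumes C: "C \<in> Mw" shows "\<exists>C'\<in>Mw. \<forall>a b. ip (C a) b = ip a (C' b)"
proof -
  obtain C' where C': "bop H UNIV C'" "\<forall>x y. ip (C x) y = ip x (C' y)"
    using bop_adjoint_exists[OF wcomm_bop[OF C]] by blast
  have "C' \<in> Mw" using wcomm_adjoint[OF D_dense_domain C C'(1)] C'(2) M_ldag M_dag by blast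
  thus ?thesis using C'(2) by blast
qed

lemma Mwc_dag: "Y \<in> Mwc \<Longrightarrow> dag H D Y \<in> Mwc"
  using bicomm_dag[OF D_dense_domain] Mw_adjoint by blast

lemma Mwc_idop: "idop D \<in> Mwc"
proof -
  have l: "ldag H D (idop D)" unfolding ldag_def idop_def using D_subspace
    by (auto simp: hsubspace_add hsubspace_scale)
  have "dag H D (idop D) \<eta> = \<eta>" if "\<eta> \<in> D" for \<eta>
    using that by (intro dag_eqI[OF D_dense_domain]) (auto simp: idop_def)
  thus ?thesis unfolding bicomm_def using l Mw_D by (auto simp: idop_def)
qed

definition red :: "('a \<Rightarrow> 'a) \<Rightarrow> 'a \<Rightarrow> 'a" where
  "red A = (\<lambda>x. if x \<in> ED then A (E x) else 0)"

lemma reduce_eq_image_red: "reduce E D N = red ` N"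
  unfolding reduce_def red_def by (rule refl)
lemma red_ED: "x \<in> ED \<Longrightarrow> red A x = A x"
  unfolding red_def using E_ED[of x] by simp

lemma
  assumes A: "ldag H D A" and E_A: "\<And>\<xi>. \<xi> \<in> D \<Longrightarrow> E (A \<xi>) = A (E \<xi>)"
    and E_dag_A: "\<And>\<xi>. \<xi> \<in> D \<Longrightarrow> E (dag H D A \<xi>) = dag H D A (E \<xi>)"
  shows ldag_red: "ldag H ED (red A)"
    and dag_red: "b \<in> ED \<Longrightarrow> dag H ED (red A) b = dag H D A b"
proof -
  have A_ED: "A a \<in> ED" if a: "a \<in> ED" for a
  proof -
    obtain \<xi> where "\<xi> \<in> D" "a = E \<xi>" using a by blast
    thus ?thesis using E_A ldag_in[OF A] by (metis imageI)
  qed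
  have dag_A_ED: "dag H D A b \<in> ED" if b: "b \<in> ED" for b
  proof -
    obtain \<xi> where "\<xi> \<in> D" "b = E \<xi>" using b by blast
    thus ?thesis using E_dag_A dag_in[OF D_dense_domain A] by (metis imageI)
  qed
  have adj: "ip (red A a) b = ip a (dag H D A b)" if a: "a \<in> ED" and b: "b \<in> ED" for a b
  proof -
    have "a \<in> D" "b \<in> D" using a b ED_subset_D by auto
    thus ?thesis using red_ED[OF a] dag_adjoint[OF D_dense_domain A] by simp
  qed
  have ED: "hsubspace H ED" using ED_dense_domain by (simp add: dense_domain_def)
  show "ldag H ED (red A)"
    unfolding ldag_def
  proof (intro conjI ballI allI impI)
    fix x y assume xy: "x \<in> ED" "y \<in> ED"
    hence "x + y \<in> ED" using ED by (simp add: hsubspace_add)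
    moreover have "x \<in> D" "y \<in> D" using xy ED_subset_D by auto
    ultimately show "red A (x + y) = red A x + red A y" using xy ldag_add[OF A] by (simp add: red_ED)
  next
    fix c x assume x: "x \<in> ED"
    hence "sm c x \<in> ED" using ED by (simp add: hsubspace_scale)
    moreover have "x \<in> D" using x ED_subset_D by auto
    ultimately show "red A (sm c x) = sm c (red A x)" using x ldag_scale[OF A] by (simp add: red_ED)
  next
    fix \<eta> assume "\<eta> \<in> ED" thus "\<exists>\<zeta>\<in>ED. \<forall>\<xi>\<in>ED. ip (red A \<xi>) \<eta> = ip \<xi> \<zeta>"
      using adj dag_A_ED by blast
  qed (simp_all add: red_ED A_ED, simp add: red_def)
  show "b \<in> ED \<Longrightarrow> dag H ED (red A) b = dag H D A b"
    using adj dag_A_ED by (intro dag_eqI[OF ED_dense_domain]) auto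
qed

lemma ldag_red_M: "A \<in> M \<Longrightarrow> ldag H ED (red A)"
  and dag_red_M: "A \<in> M \<Longrightarrow> b \<in> ED \<Longrightarrow> dag H ED (red A) b = dag H D A b"
  using ldag_red dag_red M_ldag Mw_commute_M[OF E_Mw] M_dag by blast+

lemma ldag_red_Mwc: "Y \<in> Mwc \<Longrightarrow> ldag H ED (red Y)"
  and dag_red_Mwc: "Y \<in> Mwc \<Longrightarrow> b \<in> ED \<Longrightarrow> dag H ED (red Y) b = dag H D Y b"
  using ldag_red dag_red bicomm_ldag Mw_commute_Mwc[OF E_Mw] Mwc_dag by blast+

lemma ME_ldag: "B \<in> ME \<Longrightarrow> ldag H ED B"
  using ldag_red_M by (auto simp: reduce_eq_image_red)

lemma ME_dag: "B \<in> ME \<Longrightarrow> dag H ED B \<in> ME"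
proof -
  assume "B \<in> ME"
  then obtain A where A: "A \<in> M" "B = red A" by (auto simp: reduce_eq_image_red)
  have "dag H ED (red A) = red (dag H D A)"
  proof
    fix x show "dag H ED (red A) x = red (dag H D A) x"
      by (cases "x \<in> ED") (simp_all add: dag_red_M[OF A(1)] red_ED dag_outside, simp add: red_def)
  qed
  thus ?thesis using A M_dag by (simp add: reduce_eq_image_red)
qed

lemma ME_subset_MEwc: "ME \<subseteq> MEwc"
  unfolding bicomm_def using ME_ldag wcommD by blast

definition compress :: "('a \<Rightarrow> 'a) \<Rightarrow> 'a \<Rightarrow> 'a" where
  "compress T = (\<lambda>x. if x \<in> EH then E (T x) else 0)"

lemma compress_bop:
  assumes T: "bop H UNIV T" shows "bop H EH (compress T)"
proof -
  have EH: "hsubspace H EH" using ED_dense_domain by (simp add: dense_domain_def)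
  obtain B where B: "B \<ge> 0" "\<forall>x. nm (E (T x)) \<le> B * nm x"
    using bop_bound[OF bop_comp[OF E_bop T]] by auto
  show ?thesis
    unfolding bop_def
  proof (intro conjI ballI allI impI exI)
    fix x y assume "x \<in> EH" "y \<in> EH"
    thus "compress T (x + y) = compress T x + compress T y"
      using EH by (simp add: compress_def bop_UNIV[OF T] E_linear hsubspace_add)
  next
    fix c x assume "x \<in> EH"
    thus "compress T (sm c x) = sm c (compress T x)"
      using EH by (simp add: compress_def bop_UNIV[OF T] E_linear hsubspace_scale)
  next
    fix x assume "x \<in> EH" thus "nm (compress T x) \<le> B * nm x" using B by (simp add: compress_def)
  qed (simp_all add: compress_def)
qed

lemma bop_comp_E:
  assumes C: "bop H EH C" shows "bop H UNIV (\<lambda>x. C (E x))"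
proof -
  obtain B where B: "B \<ge> 0" "\<forall>x\<in>EH. nm (C x) \<le> B * nm x" using bop_bound[OF C] by auto
  obtain BE where BE: "BE \<ge> 0" "\<forall>x. nm (E x) \<le> BE * nm x" using bop_bound[OF E_bop] by auto
  show ?thesis
  proof (rule bopI[where B="B * BE"])
    fix x
    have "nm (C (E x)) \<le> B * nm (E x)" using B by simp
    also have "\<dots> \<le> B * (BE * nm x)" using B BE by (intro mult_left_mono) auto
    finally show "nm (C (E x)) \<le> B * BE * nm x" by (simp add: mult_ac)
  qed (simp_all add: bop_add[OF C] bop_scale[OF C] E_linear)
qed

lemma MEw_adjoint:
  assumes C: "C \<in> MEw"
  shows "\<exists>C'\<in>MEw. \<forall>a\<in>EH. \<forall>b\<in>EH. ip (C a) b = ip a (C' b)"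
proof -
  obtain C' where C': "bop H UNIV C'" "\<forall>x y. ip (C (E x)) y = ip x (C' y)"
    using bop_adjoint_exists[OF bop_comp_E[OF wcomm_bop[OF C]]] by blast
  have adj: "\<forall>a\<in>EH. \<forall>b\<in>EH. ip (C a) b = ip a (compress C' b)"
  proof (intro ballI)
    fix a b assume a: "a \<in> EH" and b: "b \<in> EH"
    have "ip (C a) b = ip a (C' b)" using a C'(2) by (metis EH_iff)
    also have "\<dots> = ip (E a) (C' b)" using a by (simp add: EH_iff)
    also have "\<dots> = ip a (E (C' b))" by (rule E_selfadjoint)
    finally show "ip (C a) b = ip a (compress C' b)" using b by (simp add: compress_def)
  qed
  have "compress C' \<in> MEw"
    by (rule wcomm_adjoint[OF ED_dense_domain C compress_bop[OF C'(1)] adj ME_ldag ME_dag])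
  thus ?thesis using adj by blast
qed

lemma MEwc_comp: "X1 \<in> MEwc \<Longrightarrow> X2 \<in> MEwc \<Longrightarrow> X1 \<circ> X2 \<in> MEwc"
  by (rule bicomm_comp[OF ED_dense_domain])
lemma MEwc_dag: "X \<in> MEwc \<Longrightarrow> dag H ED X \<in> MEwc"
  by (rule bicomm_dag[OF ED_dense_domain _ MEw_adjoint])

lemma compress_MEw: assumes T: "T \<in> Mw" shows "compress T \<in> MEw"
  unfolding wcomm_def
proof (intro CollectI conjI ballI)
  show "bop H EH (compress T)" by (rule compress_bop[OF wcomm_bop[OF T]])
  fix X a b assume X: "X \<in> ME" and a: "a \<in> ED" and b: "b \<in> ED"
  obtain A where A: "A \<in> M" "X = red A" using X by (auto simp: reduce_eq_image_red)
  have aD: "a \<in> D" and bD: "b \<in> D" using a b ED_subset_D by auto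
  have Xa: "X a = A a" using A a by (simp add: red_ED)
  have AaE: "A a \<in> ED" using ldag_in[OF ldag_red_M[OF A(1)] a] A a by (simp add: red_ED)
  have dd: "dag H ED X b = dag H D A b" using dag_red_M[OF A(1) b] A by simp
  have dED: "dag H D A b \<in> ED" using dag_in[OF ED_dense_domain ldag_red_M[OF A(1)] b] dd A by simp
  have "ip (compress T (X a)) b = ip (E (T (A a))) b" using Xa AaE by (auto simp: compress_def)
  also have "\<dots> = ip (T (A a)) b" using ip_E_left[of b] b by auto
  also have "\<dots> = ip (T a) (dag H D A b)" by (rule wcommD[OF T A(1) aD bD])
  also have "\<dots> = ip (E (T a)) (dag H D A b)" using ip_E_left dED by auto
  also have "\<dots> = ip (compress T a) (dag H ED X b)" using a dd by (auto simp: compress_def)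
  finally show "ip (compress T (X a)) b = ip (compress T a) (dag H ED X b)" .
qed

lemma MEw_comp_E: assumes C: "C \<in> MEw" shows "(\<lambda>x. C (E x)) \<in> Mw"
  unfolding wcomm_def
proof (intro CollectI conjI ballI)
  show "bop H UNIV (\<lambda>x. C (E x))" by (rule bop_comp_E[OF wcomm_bop[OF C]])
  fix A \<xi> \<eta> assume A: "A \<in> M" and \<xi>: "\<xi> \<in> D" and \<eta>: "\<eta> \<in> D"
  have "red A \<in> ME" using A by (auto simp: reduce_eq_image_red)
  have E\<xi>: "E \<xi> \<in> ED" and E\<eta>: "E \<eta> \<in> ED" using \<xi> \<eta> by auto
  have C_EH: "C x \<in> EH" for x
    using wcomm_bop[OF C] by (metis bop_in bop_outside EH_iff E_linear(3))
  have "ip (C (E (A \<xi>))) \<eta> = ip (C (red A (E \<xi>))) \<eta>"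
    using Mw_commute_M[OF E_Mw A \<xi>] E\<xi> by (simp add: red_ED)
  also have "\<dots> = ip (C (red A (E \<xi>))) (E \<eta>)" using ip_E_right C_EH by auto
  also have "\<dots> = ip (C (E \<xi>)) (dag H ED (red A) (E \<eta>))"
    by (rule wcommD[OF C \<open>red A \<in> ME\<close> E\<xi> E\<eta>])
  also have "\<dots> = ip (C (E \<xi>)) (E (dag H D A \<eta>))"
    using dag_red_M[OF A E\<eta>] Mw_commute_M[OF E_Mw M_dag[OF A] \<eta>] by simp
  also have "\<dots> = ip (C (E \<xi>)) (dag H D A \<eta>)" using ip_E_right C_EH by auto
  finally show "ip (C (E (A \<xi>))) \<eta> = ip (C (E \<xi>)) (dag H D A \<eta>)" .
qed

lemma red_Mwc_MEwc: assumes Y: "Y \<in> Mwc" shows "red Y \<in> MEwc"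
  unfolding bicomm_def
proof (intro CollectI conjI ballI)
  show "ldag H ED (red Y)" by (rule ldag_red_Mwc[OF Y])
  fix C a b assume C: "C \<in> MEw" and a: "a \<in> ED" and b: "b \<in> ED"
  have aD: "a \<in> D" and bD: "b \<in> D" using a b ED_subset_D by auto
  have Ya: "red Y a = Y a" using a by (simp add: red_ED)
  have "Y a \<in> ED" using ldag_in[OF ldag_red_Mwc[OF Y] a] Ya by simp
  hence "ip (C (red Y a)) b = ip (C (E (Y a))) b" using Ya E_ED[of "Y a"] by simp
  also have "\<dots> = ip (C (E a)) (dag H D Y b)" by (rule bicommD[OF Y MEw_comp_E[OF C] aD bD])
  also have "\<dots> = ip (C a) (dag H ED (red Y) b)" using E_ED[OF a] dag_red_Mwc[OF Y b] by simp
  finally show "ip (C (red Y a)) b = ip (C a) (dag H ED (red Y) b)" .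
qed

lemma reduce_Mwc_subset: "reduce E D Mwc \<subseteq> MEwc"
  using red_Mwc_MEwc by (auto simp: reduce_eq_image_red)
end

section \<open>Extending elements of the reduced bicommutant\<close>

locale reduced_bicommutant_extension = reduced_ostar_algebra H D M E
  for H :: "('a::ab_group_add) hs" and D M E +
  fixes Z :: "'a \<Rightarrow> 'a"
  assumes M_closed: "closed_ostar H D M"
    and Z_central_support: "Z = central_support H UNIV D M E"
    and domination: "\<forall>X\<in>bicomm H (range E) (E ` D) (reduce E D M). \<exists>Y\<in>bicomm H UNIV D M.
        \<forall>(n::nat) C \<xi> \<eta>. (\<forall>k<n. C k \<in> wcomm H UNIV D M \<and> \<xi> k \<in> D) \<and> \<eta> \<in> D \<longrightarrow>
          hnorm H (\<Sum>k<n. C k (X (E (\<xi> k))))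
            \<le> hnorm H (Y ((\<Sum>k<n. C k (E (\<xi> k))) + (\<eta> - Z \<eta>)))"
    and approximation: "tclosure H (bicomm H UNIV D M) D
        (module.span (hs_sm H) {C (E \<xi>) | C \<xi>. C \<in> wcomm H UNIV D M \<and> \<xi> \<in> D}) = Z ` D"
begin

abbreviation "MwEH \<equiv> {C (E x) | C x. C \<in> Mw \<and> x \<in> UNIV}"
abbreviation "ZH \<equiv> hclosure H (vs.span MwEH)"
abbreviation "MwED \<equiv> {C (E \<xi>) | C \<xi>. C \<in> Mw \<and> \<xi> \<in> D}"
abbreviation "ZD \<equiv> Z ` D"

lemma Z_eq: "Z = orth_proj H ZH"
  using Z_central_support by (simp add: central_support_def)

lemma ZH_subspace: "hsubspace H ZH"
  by (rule hsubspace_hclosure) (simp add: hsubspace_iff_subspace)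

lemma Z_in: "Z x \<in> ZH"
  unfolding Z_eq by (rule orth_proj(1)[OF ZH_subspace hclosure_hclosure])

lemma Z_orthogonal: "z \<in> ZH \<Longrightarrow> ip (x - Z x) z = 0"
  unfolding Z_eq using orth_proj(2)[OF ZH_subspace hclosure_hclosure] by blast

lemma Z_eqI: "y \<in> ZH \<Longrightarrow> (\<And>z. z \<in> ZH \<Longrightarrow> ip (x - y) z = 0) \<Longrightarrow> Z x = y"
  unfolding Z_eq by (rule orth_proj_eqI[OF ZH_subspace]) auto

lemma Z_add: "Z (x + y) = Z x + Z y"
proof (rule Z_eqI)
  show "Z x + Z y \<in> ZH" using Z_in ZH_subspace by (simp add: hsubspace_add)
  fix z assume z: "z \<in> ZH"
  have eq: "x + y - (Z x + Z y) = (x - Z x) + (y - Z y)" by (simp add: algebra_simps)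
  show "ip (x + y - (Z x + Z y)) z = 0"
    unfolding eq using Z_orthogonal[OF z, of x] Z_orthogonal[OF z, of y] by (simp add: ip_add_left)
qed

lemma Z_scale: "Z (sm c x) = sm c (Z x)"
proof (rule Z_eqI)
  show "sm c (Z x) \<in> ZH" using Z_in ZH_subspace by (simp add: hsubspace_scale)
  fix z assume z: "z \<in> ZH"
  have eq: "sm c x - sm c (Z x) = sm c (x - Z x)" by (simp add: vs.scale_right_diff_distrib)
  show "ip (sm c x - sm c (Z x)) z = 0"
    unfolding eq using Z_orthogonal[OF z, of x] by (simp add: ip_scale_left)
qed

lemma Z_ZH: "x \<in> ZH \<Longrightarrow> Z x = x"
  by (rule Z_eqI) auto

lemma Z_zero: "Z 0 = 0"
  using Z_ZH hsubspace_0[OF ZH_subspace] by blast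

lemma ip_Z_left: "k \<in> ZH \<Longrightarrow> ip (Z x) k = ip x k"
  using Z_orthogonal[of k x] by (simp add: ip_diff_left)

lemma ip_Z_right: "k \<in> ZH \<Longrightarrow> ip k (Z x) = ip k x"
  using Z_orthogonal[of k x] ip_eq_zero_sym[of k "x - Z x"] by (simp add: ip_diff_right)

lemma Mw_maps_ZH: assumes C: "C \<in> Mw" and x: "x \<in> ZH" shows "C x \<in> ZH"
proof -
  have "C g \<in> MwEH" if g: "g \<in> MwEH" for g
  proof -
    obtain C' y where "C' \<in> Mw" "g = C' (E y)" using g by blast
    thus ?thesis using Mw_comp[OF C \<open>C' \<in> Mw\<close>] by (intro CollectI exI[of _ "\<lambda>x. C (C' x)"] exI[of _ y]) simp
  qed
  hence "MwEH \<subseteq> {x. C x \<in> vs.span MwEH}" using vs.span_base by blast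
  moreover have "vs.subspace {x. C x \<in> vs.span MwEH}"
    unfolding vs.subspace_def
    using bop_UNIV[OF wcomm_bop[OF C]] vs.span_zero vs.span_add vs.span_scale by simp
  ultimately have "vs.span MwEH \<subseteq> {x. C x \<in> vs.span MwEH}" by (rule vs.span_minimal)
  hence span: "C s \<in> vs.span MwEH" if "s \<in> vs.span MwEH" for s
    using that by blast
  show ?thesis
  proof (rule hclosureI)
    fix e :: real assume e: "e > 0"
    obtain \<delta> where \<delta>: "\<delta> > 0" "\<forall>y. nm y < \<delta> \<longrightarrow> nm (C y) < e"
      using bop_approx[OF wcomm_bop[OF C] e] by auto
    obtain s where s: "s \<in> vs.span MwEH" "nm (x - s) < \<delta>" using hclosureD[OF x \<delta>(1)] by blast
    have "nm (C x - C s) < e" using \<delta>(2) s(2) by (simp flip: bop_UNIV(5)[OF wcomm_bop[OF C]])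
    thus "\<exists>y\<in>vs.span MwEH. nm (C x - y) < e" using span[OF s(1)] by blast
  qed
qed

lemma Z_commute_Mw: assumes C: "C \<in> Mw" shows "Z (C x) = C (Z x)"
proof (rule Z_eqI)
  show "C (Z x) \<in> ZH" by (rule Mw_maps_ZH[OF C Z_in])
  fix z assume z: "z \<in> ZH"
  obtain C' where C': "C' \<in> Mw" "\<forall>a b. ip (C a) b = ip a (C' b)" using Mw_adjoint[OF C] by blast
  have "C x - C (Z x) = C (x - Z x)" by (simp add: bop_UNIV[OF wcomm_bop[OF C]])
  hence "ip (C x - C (Z x)) z = ip (x - Z x) (C' z)" using C'(2) by simp
  also have "\<dots> = 0" by (rule Z_orthogonal[OF Mw_maps_ZH[OF C'(1) z]])
  finally show "ip (C x - C (Z x)) z = 0" .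
qed

lemma Z_E: "Z (E x) = E x"
proof (rule Z_ZH)
  have "E x \<in> MwEH" using Mw_id by (intro CollectI exI[of _ "\<lambda>y. y"] exI[of _ x]) simp
  hence "E x \<in> vs.span MwEH" by (rule vs.span_base)
  thus "E x \<in> ZH" using hclosure_superset by blast
qed

lemma ZD_tclosure: "w \<in> ZD \<Longrightarrow> w \<in> tclosure H Mwc D (vs.span MwED)"
  using approximation by simp

lemma ZD_subset_D: "w \<in> ZD \<Longrightarrow> w \<in> D"
  using ZD_tclosure unfolding tclosure_def by blast

lemma ZD_approx:
  assumes "w \<in> ZD" "finite F" "F \<subseteq> Mwc" "e > 0"
  shows "\<exists>y\<in>vs.span MwED. \<forall>Y\<in>F. nm (Y (w - y)) < e"
  using ZD_tclosure[OF assms(1)] assms(2-4) unfolding tclosure_def by blast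

text \<open>A finite sum \<open>\<Sum>\<^sub>k C\<^sub>k E' \<xi>\<^sub>k\<close> is represented by the list of the pairs \<open>(C\<^sub>k, \<xi>\<^sub>k)\<close>, and \<open>ext_sum X\<close>
  evaluates the operator \<open>X\<^sub>e\<close> of the statement on it termwise.\<close>

definition admissible :: "(('a \<Rightarrow> 'a) \<times> 'a) list \<Rightarrow> bool" where
  "admissible L \<longleftrightarrow> (\<forall>p\<in>set L. fst p \<in> Mw \<and> snd p \<in> D)"
definition gen_sum :: "(('a \<Rightarrow> 'a) \<times> 'a) list \<Rightarrow> 'a" where
  "gen_sum L = sum_list (map (\<lambda>p. fst p (E (snd p))) L)"
definition ext_sum :: "('a \<Rightarrow> 'a) \<Rightarrow> (('a \<Rightarrow> 'a) \<times> 'a) list \<Rightarrow> 'a" where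
  "ext_sum X L = sum_list (map (\<lambda>p. fst p (X (E (snd p)))) L)"
definition map_coeffs :: "(('a \<Rightarrow> 'a) \<Rightarrow> 'a \<Rightarrow> 'a) \<Rightarrow> (('a \<Rightarrow> 'a) \<times> 'a) list \<Rightarrow> (('a \<Rightarrow> 'a) \<times> 'a) list" where
  "map_coeffs f L = map (\<lambda>p. (f (fst p), snd p)) L"

lemma admissible_simps[simp]:
  "admissible []"
  "admissible (p # L) \<longleftrightarrow> fst p \<in> Mw \<and> snd p \<in> D \<and> admissible L"
  "admissible (L1 @ L2) \<longleftrightarrow> admissible L1 \<and> admissible L2"
  by (auto simp: admissible_def)

lemma gen_sum_simps[simp]:
  "gen_sum [] = 0" "gen_sum (p # L) = fst p (E (snd p)) + gen_sum L"
  "gen_sum (L1 @ L2) = gen_sum L1 + gen_sum L2"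
  by (simp_all add: gen_sum_def)

lemma ext_sum_simps[simp]:
  "ext_sum X [] = 0" "ext_sum X (p # L) = fst p (X (E (snd p))) + ext_sum X L"
  "ext_sum X (L1 @ L2) = ext_sum X L1 + ext_sum X L2"
  by (simp_all add: ext_sum_def)

lemma admissible_map_coeffs:
  "(\<And>C. C \<in> Mw \<Longrightarrow> f C \<in> Mw) \<Longrightarrow> admissible L \<Longrightarrow> admissible (map_coeffs f L)"
  by (induct L) (auto simp: map_coeffs_def)

lemma
  assumes "\<And>C u. C \<in> Mw \<Longrightarrow> f C u = T (C u)" "\<And>u v. T (u + v) = T u + T v" "T 0 = 0"
    and "admissible L"
  shows gen_sum_map_coeffs: "gen_sum (map_coeffs f L) = T (gen_sum L)"
    and ext_sum_map_coeffs: "ext_sum X (map_coeffs f L) = T (ext_sum X L)"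
  using assms(4) by (induct L) (simp_all add: map_coeffs_def assms(1-3))

lemma gen_sum_D: "admissible L \<Longrightarrow> gen_sum L \<in> D"
proof (induct L)
  case (Cons p L)
  have "E (snd p) \<in> D" using Cons.prems ED_subset_D by auto
  hence "fst p (E (snd p)) \<in> D" using Cons.prems Mw_D by simp
  thus ?case using Cons by (simp add: hsubspace_add[OF D_subspace])
qed (simp add: hsubspace_0[OF D_subspace])

lemma MEwc_ED: "X \<in> MEwc \<Longrightarrow> \<xi> \<in> D \<Longrightarrow> X (E \<xi>) \<in> ED"
  using ldag_in[OF bicomm_ldag] by blast

lemma ext_sum_D: "X \<in> MEwc \<Longrightarrow> admissible L \<Longrightarrow> ext_sum X L \<in> D"
proof (induct L)
  case (Cons p L)
  have "X (E (snd p)) \<in> D" using Cons.prems MEwc_ED ED_subset_D by auto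
  hence "fst p (X (E (snd p))) \<in> D" using Cons.prems Mw_D by simp
  thus ?case using Cons by (simp add: hsubspace_add[OF D_subspace])
qed (simp add: hsubspace_0[OF D_subspace])

lemma ext_sum_ZH: "X \<in> MEwc \<Longrightarrow> admissible L \<Longrightarrow> ext_sum X L \<in> vs.span MwEH"
proof (induct L)
  case (Cons p L)
  have "X (E (snd p)) \<in> ED" using Cons.prems MEwc_ED by auto
  hence "fst p (X (E (snd p))) = fst p (E (X (E (snd p))))" using E_ED[of "X (E (snd p))"] by simp
  moreover have "fst p (E (X (E (snd p)))) \<in> MwEH" using Cons.prems
    by (intro CollectI exI[of _ "fst p"] exI[of _ "X (E (snd p))"]) simp
  ultimately show ?case using Cons by (simp add: vs.span_add vs.span_base)
qed (simp add: vs.span_zero)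

lemma span_MwED_gen_sum: assumes y: "y \<in> vs.span MwED" shows "\<exists>L. admissible L \<and> gen_sum L = y"
proof -
  let ?S = "{y. \<exists>L. admissible L \<and> gen_sum L = y}"
  have "MwED \<subseteq> ?S"
  proof
    fix v assume "v \<in> MwED"
    then obtain C \<xi> where "v = C (E \<xi>)" "C \<in> Mw" "\<xi> \<in> D" by blast
    thus "v \<in> ?S" by (intro CollectI exI[of _ "[(C, \<xi>)]"]) simp
  qed
  moreover have "vs.subspace ?S"
    unfolding vs.subspace_def
  proof (intro conjI ballI allI)
    show "0 \<in> ?S" by (intro CollectI exI[of _ "[]"]) simp
  next
    fix x y assume "x \<in> ?S" "y \<in> ?S"
    then obtain L1 L2 where "admissible L1" "gen_sum L1 = x" "admissible L2" "gen_sum L2 = y" by blast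
    thus "x + y \<in> ?S" by (intro CollectI exI[of _ "L1 @ L2"]) simp
  next
    fix c x assume "x \<in> ?S"
    then obtain L where L: "admissible L" "gen_sum L = x" by blast
    have "admissible (map_coeffs (\<lambda>C u. sm c (C u)) L)"
      by (intro admissible_map_coeffs L(1)) (simp add: Mw_scale)
    moreover have "gen_sum (map_coeffs (\<lambda>C u. sm c (C u)) L) = sm c x"
      using L by (simp add: gen_sum_map_coeffs vs.scale_right_distrib)
    ultimately show "sm c x \<in> ?S" by blast
  qed
  ultimately have "vs.span MwED \<subseteq> ?S" by (rule vs.span_minimal)
  thus ?thesis using y by blast
qed

lemma ZD_approx_gen_sum:
  assumes "w \<in> ZD" "finite F" "F \<subseteq> Mwc" "e > 0"
  shows "\<exists>L. admissible L \<and> (\<forall>Y\<in>F. nm (Y (w - gen_sum L)) < e)"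
proof -
  obtain y where y: "y \<in> vs.span MwED" "\<forall>Y\<in>F. nm (Y (w - y)) < e" using ZD_approx[OF assms] by blast
  obtain L where "admissible L" "gen_sum L = y" using span_MwED_gen_sum[OF y(1)] by blast
  thus ?thesis using y(2) by blast
qed

definition dominates :: "('a \<Rightarrow> 'a) \<Rightarrow> ('a \<Rightarrow> 'a) \<Rightarrow> bool" where
  "dominates Y X \<longleftrightarrow> Y \<in> Mwc \<and> (\<forall>L. admissible L \<longrightarrow> nm (ext_sum X L) \<le> nm (Y (gen_sum L)))"

text \<open>Only the instance \<open>\<eta> = 0\<close> of condition (i) is needed.\<close>
lemma dominating_exists: assumes X: "X \<in> MEwc" shows "\<exists>Y. dominates Y X"
proof -
  obtain Y where Y: "Y \<in> Mwc" and dom: "\<forall>(n::nat) C \<xi> \<eta>. (\<forall>k<n. C k \<in> Mw \<and> \<xi> k \<in> D) \<and> \<eta> \<in> D \<longrightarrow>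
          nm (\<Sum>k<n. C k (X (E (\<xi> k)))) \<le> nm (Y ((\<Sum>k<n. C k (E (\<xi> k))) + (\<eta> - Z \<eta>)))"
    using domination X by blast
  have "nm (ext_sum X L) \<le> nm (Y (gen_sum L))" if L: "admissible L" for L
  proof -
    have "\<forall>k<length L. fst (L ! k) \<in> Mw \<and> snd (L ! k) \<in> D" using L by (auto simp: admissible_def)
    hence "nm (\<Sum>k<length L. fst (L ! k) (X (E (snd (L ! k)))))
      \<le> nm (Y ((\<Sum>k<length L. fst (L ! k) (E (snd (L ! k)))) + (0 - Z 0)))"
      using dom[rule_format, of "length L" "\<lambda>k. fst (L ! k)" "\<lambda>k. snd (L ! k)" 0]
        hsubspace_0[OF D_subspace] by simp
    thus ?thesis unfolding ext_sum_def gen_sum_def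
      by (simp add: sum_list_sum_nth atLeast0LessThan Z_zero)
  qed
  thus ?thesis using Y unfolding dominates_def by blast
qed

lemma dominates_diff:
  assumes dom: "dominates Y X" and L1: "admissible L1" and L2: "admissible L2"
  shows "nm (ext_sum X L1 - ext_sum X L2) \<le> nm (Y (gen_sum L1 - gen_sum L2))"
proof -
  define L where "L = L1 @ map_coeffs (\<lambda>C u. - C u) L2"
  have "admissible L" unfolding L_def using L1 L2 by (simp add: admissible_map_coeffs Mw_minus)
  moreover have "gen_sum L = gen_sum L1 - gen_sum L2" "ext_sum X L = ext_sum X L1 - ext_sum X L2"
    unfolding L_def using L2 by (simp_all add: gen_sum_map_coeffs[where T = uminus]
        ext_sum_map_coeffs[where T = uminus])
  ultimately show ?thesis using dom unfolding dominates_def by metis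
qed

lemma dominates_triangle:
  assumes dom: "dominates Y X" and L1: "admissible L1" and L2: "admissible L2" and w: "w \<in> D"
  shows "nm (ext_sum X L1 - ext_sum X L2) \<le> nm (Y (w - gen_sum L1)) + nm (Y (w - gen_sum L2))"
proof -
  have Y: "ldag H D Y" using dom bicomm_ldag unfolding dominates_def by blast
  have "gen_sum L1 - gen_sum L2 = (w - gen_sum L2) - (w - gen_sum L1)" by simp
  hence "Y (gen_sum L1 - gen_sum L2) = Y (w - gen_sum L2) - Y (w - gen_sum L1)"
    using Y w gen_sum_D[OF L1] gen_sum_D[OF L2] D_subspace by (simp add: ldag_diff hsubspace_diff)
  hence "nm (Y (gen_sum L1 - gen_sum L2)) \<le> nm (Y (w - gen_sum L1)) + nm (Y (w - gen_sum L2))"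
    using nm_diff_le[of "Y (w - gen_sum L2)" "Y (w - gen_sum L1)"] by simp
  thus ?thesis using dominates_diff[OF dom L1 L2] by linarith
qed

definition ext_limit :: "('a \<Rightarrow> 'a) \<Rightarrow> ('a \<Rightarrow> 'a) \<Rightarrow> 'a \<Rightarrow> 'a \<Rightarrow> bool" where
  "ext_limit X Y w l \<longleftrightarrow>
     (\<forall>e>0. \<exists>\<delta>>0. \<forall>L. admissible L \<and> nm (Y (w - gen_sum L)) < \<delta> \<longrightarrow> nm (ext_sum X L - l) < e)"

lemma ext_limitI:
  assumes dom: "dominates Y X" and w: "w \<in> ZD"
    and approx: "\<And>e. e > 0 \<Longrightarrow> \<exists>L. admissible L \<and> nm (Y (w - gen_sum L)) < e \<and> nm (ext_sum X L - l) < e"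
  shows "ext_limit X Y w l"
  unfolding ext_limit_def
proof (intro allI impI)
  fix e :: real assume e: "e > 0"
  obtain L' where L': "admissible L'" "nm (Y (w - gen_sum L')) < e/3" "nm (ext_sum X L' - l) < e/3"
    using approx[of "e/3"] e by auto
  show "\<exists>\<delta>>0. \<forall>L. admissible L \<and> nm (Y (w - gen_sum L)) < \<delta> \<longrightarrow> nm (ext_sum X L - l) < e"
  proof (intro exI[of _ "e/3"] conjI allI impI)
    fix L assume L: "admissible L \<and> nm (Y (w - gen_sum L)) < e / 3"
    have "nm (ext_sum X L - l) \<le> nm (ext_sum X L - ext_sum X L') + nm (ext_sum X L' - l)"
      by (rule nm_triangle_diff)
    also have "nm (ext_sum X L - ext_sum X L') \<le> nm (Y (w - gen_sum L)) + nm (Y (w - gen_sum L'))"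
      using dominates_triangle[OF dom _ L'(1) ZD_subset_D[OF w]] L by blast
    finally show "nm (ext_sum X L - l) < e" using L L' by linarith
  qed (use e in simp)
qed

lemma ext_limitD:
  assumes dom: "dominates Y X" and w: "w \<in> ZD" and lim: "ext_limit X Y w l"
    and F: "finite F" "F \<subseteq> Mwc" and e: "e > 0"
  shows "\<exists>L. admissible L \<and> (\<forall>Y'\<in>F. nm (Y' (w - gen_sum L)) < e) \<and> nm (Y (w - gen_sum L)) < e
    \<and> nm (ext_sum X L - l) < e"
proof -
  obtain \<delta> where \<delta>: "\<delta> > 0" "\<forall>L. admissible L \<and> nm (Y (w - gen_sum L)) < \<delta> \<longrightarrow> nm (ext_sum X L - l) < e"
    using lim e unfolding ext_limit_def by blast
  have "Y \<in> Mwc" using dom by (simp add: dominates_def)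
  then obtain L where L: "admissible L" "\<forall>Y'\<in>insert Y F. nm (Y' (w - gen_sum L)) < min e \<delta>"
    using ZD_approx_gen_sum[OF w, of "insert Y F" "min e \<delta>"] F e \<delta>(1) by auto
  thus ?thesis using \<delta>(2) by (intro exI[of _ L]) auto
qed

lemma ext_limit_approx:
  assumes dom: "dominates Y X" and w: "w \<in> ZD" and lim: "ext_limit X Y w l" and e: "e > 0"
  shows "\<exists>L. admissible L \<and> nm (w - gen_sum L) < e \<and> nm (Y (w - gen_sum L)) < e
    \<and> nm (ext_sum X L - l) < e"
proof -
  obtain L where L: "admissible L" "nm (idop D (w - gen_sum L)) < e" "nm (Y (w - gen_sum L)) < e"
      "nm (ext_sum X L - l) < e"
    using ext_limitD[OF dom w lim, of "{idop D}" e] Mwc_idop e by auto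
  have "w - gen_sum L \<in> D" using ZD_subset_D[OF w] gen_sum_D[OF L(1)] D_subspace by (simp add: hsubspace_diff)
  thus ?thesis using L by (intro exI[of _ L]) (simp add: idop_def)
qed

lemma ext_limit_unique:
  assumes dom: "dominates Y X" and w: "w \<in> ZD"
    and l1: "ext_limit X Y w l1" and l2: "ext_limit X Y w l2"
  shows "l1 = l2"
proof (rule nm_small_zero[of "l1 - l2", simplified])
  fix e :: real assume e: "e > 0"
  obtain \<delta> where \<delta>: "\<delta> > 0" "\<forall>L. admissible L \<and> nm (Y (w - gen_sum L)) < \<delta> \<longrightarrow> nm (ext_sum X L - l2) < e/2"
    using l2 e unfolding ext_limit_def by (meson half_gt_zero)
  obtain L where L: "admissible L" "nm (Y (w - gen_sum L)) < min \<delta> (e/2)" "nm (ext_sum X L - l1) < min \<delta> (e/2)"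
    using ext_limitD[OF dom w l1, of "{}" "min \<delta> (e/2)"] e \<delta>(1) by auto
  have "nm (ext_sum X L - l2) < e/2" using \<delta>(2) L by auto
  moreover have "nm (l1 - l2) \<le> nm (ext_sum X L - l1) + nm (ext_sum X L - l2)"
    using nm_triangle_diff[of l1 l2 "ext_sum X L"] nm_commute[of l1 "ext_sum X L"] by simp
  ultimately show "nm (l1 - l2) < e" using L(3) by linarith
qed

lemma ext_sum_red_comp:
  assumes A: "A \<in> M" and X: "X \<in> MEwc" and L: "admissible L"
  shows "ext_sum (red A \<circ> X) L = A (ext_sum X L)"
  using L
proof (induct L)
  case (Cons p L)
  have ED: "X (E (snd p)) \<in> ED" using Cons.prems MEwc_ED[OF X] by simp
  hence XD: "X (E (snd p)) \<in> D" using ED_subset_D by auto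
  have C: "fst p \<in> Mw" using Cons.prems by simp
  have "ext_sum (red A \<circ> X) (p # L) = fst p (A (X (E (snd p)))) + A (ext_sum X L)"
    using Cons ED by (simp add: red_ED comp_def)
  also have "fst p (A (X (E (snd p)))) = A (fst p (X (E (snd p))))" by (rule Mw_commute_M[OF C A XD])
  also have "A (fst p (X (E (snd p)))) + A (ext_sum X L) = A (ext_sum X (p # L))"
    using ldag_add[OF M_ldag[OF A] Mw_D[OF C XD] ext_sum_D[OF X]] Cons.prems by simp
  finally show ?case .
qed (simp add: ldag_zero[OF M_ldag[OF A] D_subspace])

text \<open>The net of the values \<open>X\<^sub>e u\<close>, where \<open>u\<close> runs through \<open>\<langle>\<M>'\<^sub>w E'\<D>\<rangle>\<close> towards \<open>w\<close> in the graph
  topology of \<open>\<M>''\<^sub>w\<^sub>c\<close>, as a filter on \<open>\<H>\<close>.\<close>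
definition approx_filter :: "('a \<Rightarrow> 'a) \<Rightarrow> 'a \<Rightarrow> 'a filter" where
  "approx_filter X w = (INF b\<in>{(F, e). finite F \<and> F \<subseteq> Mwc \<and> e > 0}.
     principal {ext_sum X L | L. admissible L \<and> (\<forall>Y\<in>fst b. nm (Y (w - gen_sum L)) < snd b)})"

lemma eventually_approx_filter:
  "eventually P (approx_filter X w) \<longleftrightarrow> (\<exists>F e. finite F \<and> F \<subseteq> Mwc \<and> e > 0 \<and>
     (\<forall>L. admissible L \<and> (\<forall>Y\<in>F. nm (Y (w - gen_sum L)) < e) \<longrightarrow> P (ext_sum X L)))"
proof -
  let ?B = "{(F, e). finite F \<and> F \<subseteq> Mwc \<and> (e::real) > 0}"
  let ?S = "\<lambda>b. {ext_sum X L | L. admissible L \<and> (\<forall>Y\<in>fst b. nm (Y (w - gen_sum L)) < snd b)}"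
  have "({}, 1) \<in> ?B" by simp
  hence "?B \<noteq> {}" by blast
  moreover have "\<exists>c\<in>?B. principal (?S c) \<le> inf (principal (?S a)) (principal (?S b))"
    if "a \<in> ?B" "b \<in> ?B" for a b
    using that by (intro bexI[of _ "(fst a \<union> fst b, min (snd a) (snd b))"]) auto
  ultimately have "eventually P (approx_filter X w) \<longleftrightarrow> (\<exists>b\<in>?B. \<forall>x\<in>?S b. P x)"
    unfolding approx_filter_def by (subst eventually_INF_base) (auto simp: eventually_principal)
  also have "\<dots> \<longleftrightarrow> (\<exists>F e. finite F \<and> F \<subseteq> Mwc \<and> e > 0 \<and>
     (\<forall>L. admissible L \<and> (\<forall>Y\<in>F. nm (Y (w - gen_sum L)) < e) \<longrightarrow> P (ext_sum X L)))"
  proof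
    assume "\<exists>b\<in>?B. \<forall>x\<in>?S b. P x"
    then obtain F e where "(F, e) \<in> ?B" "\<forall>x\<in>?S (F, e). P x" by blast
    thus "\<exists>F e. finite F \<and> F \<subseteq> Mwc \<and> e > 0 \<and>
       (\<forall>L. admissible L \<and> (\<forall>Y\<in>F. nm (Y (w - gen_sum L)) < e) \<longrightarrow> P (ext_sum X L))"
      by (intro exI[of _ F] exI[of _ e]) auto
  next
    assume "\<exists>F e. finite F \<and> F \<subseteq> Mwc \<and> e > 0 \<and>
       (\<forall>L. admissible L \<and> (\<forall>Y\<in>F. nm (Y (w - gen_sum L)) < e) \<longrightarrow> P (ext_sum X L))"
    then obtain F e where "finite F" "F \<subseteq> Mwc" "e > 0"
      "\<forall>L. admissible L \<and> (\<forall>Y\<in>F. nm (Y (w - gen_sum L)) < e) \<longrightarrow> P (ext_sum X L)" by blast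
    thus "\<exists>b\<in>?B. \<forall>x\<in>?S b. P x" by (intro bexI[of _ "(F, e)"]) auto
  qed
  finally show ?thesis .
qed

lemma approx_filter_nontrivial:
  assumes w: "w \<in> ZD" shows "approx_filter X w \<noteq> bot"
proof
  assume "approx_filter X w = bot"
  hence "eventually (\<lambda>x. False) (approx_filter X w)" by simp
  then obtain F e where "finite F" "F \<subseteq> Mwc" "e > 0"
    and "\<forall>L. \<not> (admissible L \<and> (\<forall>Y\<in>F. nm (Y (w - gen_sum L)) < e))"
    unfolding eventually_approx_filter by blast
  thus False using ZD_approx_gen_sum[OF w] by blast
qed

lemma approx_filter_D: "X \<in> MEwc \<Longrightarrow> eventually (\<lambda>x. x \<in> D) (approx_filter X w)"
  unfolding eventually_approx_filter using ext_sum_D by (intro exI[of _ "{}"] exI[of _ 1]) auto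

text \<open>The approximating net is Cauchy for the graph topology of \<open>\<M>\<close>, since \<open>(A X)\<^sub>e = A X\<^sub>e\<close> is
  dominated by condition (i) as well.\<close>
lemma approx_filter_Cauchy:
  assumes X: "X \<in> MEwc" and w: "w \<in> ZD" and A: "A \<in> M" and e: "e > 0"
  shows "\<exists>P. eventually P (approx_filter X w) \<and>
    (\<forall>x y. P x \<and> P y \<and> x \<in> D \<and> y \<in> D \<longrightarrow> nm (A (x - y)) < e)"
proof -
  have "red A \<in> MEwc" using A ME_subset_MEwc by (auto simp: reduce_eq_image_red)
  then obtain YA where dom: "dominates YA (red A \<circ> X)" using dominating_exists MEwc_comp X by blast
  hence YA: "YA \<in> Mwc" by (simp add: dominates_def)
  define P where "P = (\<lambda>x. \<exists>L. x = ext_sum X L \<and> admissible L \<and> nm (YA (w - gen_sum L)) < e/2)"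
  have "eventually P (approx_filter X w)"
    unfolding eventually_approx_filter P_def using YA e by (intro exI[of _ "{YA}"] exI[of _ "e/2"]) auto
  moreover have "nm (A (x - y)) < e" if "P x" "P y" "x \<in> D" "y \<in> D" for x y
  proof -
    obtain L1 L2 where L: "admissible L1" "nm (YA (w - gen_sum L1)) < e/2" "x = ext_sum X L1"
      "admissible L2" "nm (YA (w - gen_sum L2)) < e/2" "y = ext_sum X L2"
      using \<open>P x\<close> \<open>P y\<close> unfolding P_def by blast
    have "A (x - y) = A x - A y" using ldag_diff[OF M_ldag[OF A] D_subspace] that by simp
    also have "\<dots> = ext_sum (red A \<circ> X) L1 - ext_sum (red A \<circ> X) L2"
      using ext_sum_red_comp[OF A X] L by simp
    finally have "nm (A (x - y)) \<le> nm (YA (w - gen_sum L1)) + nm (YA (w - gen_sum L2))"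
      using dominates_triangle[OF dom L(1) L(4) ZD_subset_D[OF w]] by simp
    thus ?thesis using L by linarith
  qed
  ultimately show ?thesis by blast
qed

lemma ext_limit_exists:
  assumes X: "X \<in> MEwc" and dom: "dominates Y X" and w: "w \<in> ZD"
  shows "\<exists>l\<in>D. ext_limit X Y w l"
proof -
  let ?F = "approx_filter X w"
  obtain l where l: "l \<in> D" "\<forall>A\<in>M. \<forall>e>0. eventually (\<lambda>x. nm (A (x - l)) < e) ?F"
    using M_closed approx_filter_nontrivial[OF w] approx_filter_D[OF X] approx_filter_Cauchy[OF X w]
    unfolding closed_ostar_def by blast
  have near_l: "eventually (\<lambda>x. nm (x - l) < e) ?F" if e: "e > 0" for e
    using eventually_conj[OF approx_filter_D[OF X] l(2)[rule_format, OF M_idop e]]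
  proof (rule eventually_mono)
    fix x assume "x \<in> D \<and> nm (idop D (x - l)) < e"
    moreover from this have "x - l \<in> D" using l(1) D_subspace by (simp add: hsubspace_diff)
    ultimately show "nm (x - l) < e" by (simp add: idop_def)
  qed
  have "ext_limit X Y w l"
  proof (rule ext_limitI[OF dom w])
    fix e :: real assume e: "e > 0"
    obtain F e' where F: "finite F" "F \<subseteq> Mwc" "e' > 0" and near:
      "\<forall>L. admissible L \<and> (\<forall>Y\<in>F. nm (Y (w - gen_sum L)) < e') \<longrightarrow> nm (ext_sum X L - l) < e"
      using near_l[OF e] unfolding eventually_approx_filter by blast
    have "Y \<in> Mwc" using dom by (simp add: dominates_def)
    then obtain L where "admissible L" "\<forall>Y'\<in>insert Y F. nm (Y' (w - gen_sum L)) < min e e'"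
      using ZD_approx_gen_sum[OF w, of "insert Y F" "min e e'"] F e by auto
    thus "\<exists>L. admissible L \<and> nm (Y (w - gen_sum L)) < e \<and> nm (ext_sum X L - l) < e"
      using near by auto
  qed
  thus ?thesis using l(1) by blast
qed

lemma ext_limit_add:
  assumes dom: "dominates Y X" and w1: "w1 \<in> ZD" and w2: "w2 \<in> ZD" and w: "w1 + w2 \<in> ZD"
    and l1: "ext_limit X Y w1 l1" and l2: "ext_limit X Y w2 l2"
  shows "ext_limit X Y (w1 + w2) (l1 + l2)"
proof (rule ext_limitI[OF dom w])
  fix e :: real assume e: "e > 0"
  obtain L1 where L1: "admissible L1" "nm (Y (w1 - gen_sum L1)) < e/2" "nm (ext_sum X L1 - l1) < e/2"
    using ext_limit_approx[OF dom w1 l1, of "e/2"] e by auto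
  obtain L2 where L2: "admissible L2" "nm (Y (w2 - gen_sum L2)) < e/2" "nm (ext_sum X L2 - l2) < e/2"
    using ext_limit_approx[OF dom w2 l2, of "e/2"] e by auto
  have Y: "ldag H D Y" using dom bicomm_ldag unfolding dominates_def by blast
  have in_D: "w1 - gen_sum L1 \<in> D" "w2 - gen_sum L2 \<in> D"
    using ZD_subset_D w1 w2 gen_sum_D L1(1) L2(1) D_subspace by (auto simp: hsubspace_diff)
  have eq: "w1 + w2 - gen_sum (L1 @ L2) = (w1 - gen_sum L1) + (w2 - gen_sum L2)"
    by (simp add: algebra_simps)
  have "Y (w1 + w2 - gen_sum (L1 @ L2)) = Y (w1 - gen_sum L1) + Y (w2 - gen_sum L2)"
    unfolding eq by (rule ldag_add[OF Y in_D])
  hence Y_bound: "nm (Y (w1 + w2 - gen_sum (L1 @ L2))) < e"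
    using nm_triangle[of "Y (w1 - gen_sum L1)" "Y (w2 - gen_sum L2)"] L1 L2 by simp
  have eq': "ext_sum X (L1 @ L2) - (l1 + l2) = (ext_sum X L1 - l1) + (ext_sum X L2 - l2)"
    by (simp add: algebra_simps)
  have X_bound: "nm (ext_sum X (L1 @ L2) - (l1 + l2)) < e"
    unfolding eq' using nm_triangle[of "ext_sum X L1 - l1" "ext_sum X L2 - l2"] L1 L2 by simp
  show "\<exists>L. admissible L \<and> nm (Y (w1 + w2 - gen_sum L)) < e \<and> nm (ext_sum X L - (l1 + l2)) < e"
    using Y_bound X_bound L1(1) L2(1) by (intro exI[of _ "L1 @ L2"]) simp
qed

lemma ext_limit_bop:
  assumes dom: "dominates Y X" and T: "bop H UNIV T"
    and T_Mw: "\<And>C. C \<in> Mw \<Longrightarrow> (\<lambda>u. T (C u)) \<in> Mw" and Y_T: "\<And>u. u \<in> D \<Longrightarrow> Y (T u) = T (Y u)"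
    and w: "w \<in> ZD" and Tw: "T w \<in> ZD" and l: "ext_limit X Y w l"
  shows "ext_limit X Y (T w) (T l)"
proof (rule ext_limitI[OF dom Tw])
  fix e :: real assume e: "e > 0"
  obtain \<delta> where \<delta>: "\<delta> > 0" "\<forall>u. nm u < \<delta> \<longrightarrow> nm (T u) < e" using bop_approx[OF T e] by auto
  obtain L where L: "admissible L" "nm (Y (w - gen_sum L)) < \<delta>" "nm (ext_sum X L - l) < \<delta>"
    using ext_limit_approx[OF dom w l \<delta>(1)] by auto
  define L' where "L' = map_coeffs (\<lambda>C u. T (C u)) L"
  have L': "admissible L'" unfolding L'_def using T_Mw L(1) by (rule admissible_map_coeffs)
  have "gen_sum L' = T (gen_sum L)" "ext_sum X L' = T (ext_sum X L)"
    unfolding L'_def using L(1) by (simp_all add: gen_sum_map_coeffs ext_sum_map_coeffs bop_UNIV[OF T])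
  hence "T w - gen_sum L' = T (w - gen_sum L)" "ext_sum X L' - T l = T (ext_sum X L - l)"
    by (simp_all add: bop_UNIV(5)[OF T])
  moreover have "w - gen_sum L \<in> D"
    using ZD_subset_D[OF w] gen_sum_D[OF L(1)] D_subspace by (simp add: hsubspace_diff)
  ultimately have "Y (T w - gen_sum L') = T (Y (w - gen_sum L))"
    "ext_sum X L' - T l = T (ext_sum X L - l)"
    using Y_T by simp_all
  thus "\<exists>L. admissible L \<and> nm (Y (T w - gen_sum L)) < e \<and> nm (ext_sum X L - T l) < e"
    using L L' \<delta>(2) by auto
qed

lemma ext_limit_E:
  assumes dom: "dominates Y X" and \<xi>: "\<xi> \<in> D" and w: "E \<xi> \<in> ZD"
  shows "ext_limit X Y (E \<xi>) (X (E \<xi>))"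
proof (rule ext_limitI[OF dom w])
  fix e :: real assume "e > 0"
  moreover have "ldag H D Y" using dom bicomm_ldag unfolding dominates_def by blast
  hence "Y 0 = 0" using D_subspace by (rule ldag_zero)
  ultimately show "\<exists>L. admissible L \<and> nm (Y (E \<xi> - gen_sum L)) < e \<and> nm (ext_sum X L - X (E \<xi>)) < e"
    using Mw_id \<xi> by (intro exI[of _ "[((\<lambda>x. x), \<xi>)]"]) simp
qed

lemma ext_limit_ZH:
  assumes X: "X \<in> MEwc" and dom: "dominates Y X" and w: "w \<in> ZD" and l: "ext_limit X Y w l"
  shows "l \<in> ZH"
proof (rule hclosureI)
  fix e :: real assume "e > 0"
  then obtain L where L: "admissible L" "nm (ext_sum X L - l) < e"
    using ext_limit_approx[OF dom w l] by blast
  have "nm (l - ext_sum X L) < e" using L(2) nm_commute[of l "ext_sum X L"] by simp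
  thus "\<exists>y\<in>vs.span MwEH. nm (l - y) < e" using ext_sum_ZH[OF X L(1)] by blast
qed

definition dominating :: "('a \<Rightarrow> 'a) \<Rightarrow> 'a \<Rightarrow> 'a" where
  "dominating X = (SOME Y. dominates Y X)"
definition ext_val :: "('a \<Rightarrow> 'a) \<Rightarrow> 'a \<Rightarrow> 'a" where
  "ext_val X w = (SOME l. l \<in> D \<and> ext_limit X (dominating X) w l)"
definition extension :: "('a \<Rightarrow> 'a) \<Rightarrow> 'a \<Rightarrow> 'a" where
  "extension X = (\<lambda>\<xi>. if \<xi> \<in> D then ext_val X (Z \<xi>) else 0)"

lemma dominates_dominating: "X \<in> MEwc \<Longrightarrow> dominates (dominating X) X"
  unfolding dominating_def using dominating_exists by (rule someI_ex)

lemma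
  assumes X: "X \<in> MEwc" and w: "w \<in> ZD"
  shows ext_val_D: "ext_val X w \<in> D"
    and ext_limit_ext_val: "ext_limit X (dominating X) w (ext_val X w)"
proof -
  have "\<exists>l. l \<in> D \<and> ext_limit X (dominating X) w l"
    using ext_limit_exists[OF X dominates_dominating[OF X] w] by blast
  hence "ext_val X w \<in> D \<and> ext_limit X (dominating X) w (ext_val X w)"
    unfolding ext_val_def by (rule someI_ex)
  thus "ext_val X w \<in> D" "ext_limit X (dominating X) w (ext_val X w)" by auto
qed

lemma ext_val_eqI: "X \<in> MEwc \<Longrightarrow> w \<in> ZD \<Longrightarrow> ext_limit X (dominating X) w l \<Longrightarrow> ext_val X w = l"
  using ext_limit_unique[OF dominates_dominating _ ext_limit_ext_val] by blast

lemma extension_D: "X \<in> MEwc \<Longrightarrow> \<xi> \<in> D \<Longrightarrow> extension X \<xi> \<in> D"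
  by (simp add: extension_def ext_val_D)

lemma extension_add:
  assumes X: "X \<in> MEwc" and \<xi>: "\<xi> \<in> D" and \<eta>: "\<eta> \<in> D"
  shows "extension X (\<xi> + \<eta>) = extension X \<xi> + extension X \<eta>"
proof -
  have s: "\<xi> + \<eta> \<in> D" using \<xi> \<eta> D_subspace by (simp add: hsubspace_add)
  hence "Z \<xi> + Z \<eta> \<in> ZD" by (metis Z_add imageI)
  hence "ext_val X (Z \<xi> + Z \<eta>) = ext_val X (Z \<xi>) + ext_val X (Z \<eta>)"
    using \<xi> \<eta> by (intro ext_val_eqI[OF X] ext_limit_add[OF dominates_dominating[OF X]] ext_limit_ext_val[OF X]) auto
  thus ?thesis using \<xi> \<eta> s by (simp add: extension_def Z_add)
qed

lemma extension_scale:
  assumes X: "X \<in> MEwc" and \<xi>: "\<xi> \<in> D"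
  shows "extension X (sm c \<xi>) = sm c (extension X \<xi>)"
proof -
  have s: "sm c \<xi> \<in> D" using \<xi> D_subspace by (simp add: hsubspace_scale)
  hence "sm c (Z \<xi>) \<in> ZD" by (metis Z_scale imageI)
  moreover have "ldag H D (dominating X)"
    using dominates_dominating[OF X] bicomm_ldag unfolding dominates_def by blast
  ultimately have "ext_val X (sm c (Z \<xi>)) = sm c (ext_val X (Z \<xi>))"
    using \<xi> Mw_scale ldag_scale
    by (intro ext_val_eqI[OF X] ext_limit_bop[OF dominates_dominating[OF X] bop_sm]
        ext_limit_ext_val[OF X]) auto
  thus ?thesis using \<xi> s by (simp add: extension_def Z_scale)
qed

lemma extension_commute_Mw:
  assumes X: "X \<in> MEwc" and C: "C \<in> Mw" and \<xi>: "\<xi> \<in> D"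
  shows "C (extension X \<xi>) = extension X (C \<xi>)"
proof -
  have s: "C \<xi> \<in> D" using Mw_D[OF C \<xi>] .
  hence "C (Z \<xi>) \<in> ZD" by (metis Z_commute_Mw[OF C] imageI)
  moreover have "dominating X \<in> Mwc" using dominates_dominating[OF X] by (simp add: dominates_def)
  ultimately have "ext_val X (C (Z \<xi>)) = C (ext_val X (Z \<xi>))"
    using \<xi> Mw_comp[OF C] Mw_commute_Mwc[OF C]
    by (intro ext_val_eqI[OF X] ext_limit_bop[OF dominates_dominating[OF X] wcomm_bop[OF C]]
        ext_limit_ext_val[OF X]) auto
  thus ?thesis using \<xi> s by (simp add: extension_def Z_commute_Mw[OF C])
qed

lemma extension_E: assumes X: "X \<in> MEwc" and \<xi>: "\<xi> \<in> D" shows "extension X (E \<xi>) = X (E \<xi>)"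
proof -
  have ED: "E \<xi> \<in> D" using \<xi> ED_subset_D by auto
  hence w: "E \<xi> \<in> ZD" by (metis Z_E imageI)
  have "ext_val X (E \<xi>) = X (E \<xi>)"
    by (rule ext_val_eqI[OF X w ext_limit_E[OF dominates_dominating[OF X] \<xi> w]])
  thus ?thesis using ED by (simp add: extension_def Z_E)
qed

lemma extension_ZH: "X \<in> MEwc \<Longrightarrow> \<xi> \<in> D \<Longrightarrow> extension X \<xi> \<in> ZH"
  using ext_limit_ZH[OF _ dominates_dominating _ ext_limit_ext_val] by (simp add: extension_def)

lemma MEwc_weak_commute_Mw:
  assumes X: "X \<in> MEwc" and T: "T \<in> Mw" and a: "a \<in> ED" and b: "b \<in> ED"
  shows "ip (T (X a)) b = ip (T a) (dag H ED X b)"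
proof -
  have in_EH: "x \<in> EH" if "x \<in> ED" for x using that by blast
  have Xa: "X a \<in> EH" using in_EH[OF ldag_in[OF bicomm_ldag[OF X] a]] .
  have Xb: "dag H ED X b \<in> EH" using in_EH[OF dag_in[OF ED_dense_domain bicomm_ldag[OF X] b]] .
  have "ip (T (X a)) b = ip (compress T (X a)) b"
    using Xa ip_E_left[OF in_EH[OF b]] by (simp add: compress_def)
  also have "\<dots> = ip (compress T a) (dag H ED X b)" by (rule bicommD[OF X compress_MEw[OF T] a b])
  also have "\<dots> = ip (T a) (dag H ED X b)"
    using in_EH[OF a] ip_E_left[OF Xb] by (simp add: compress_def)
  finally show ?thesis .
qed

lemma ip_ext_sum_gen_sum:
  assumes X: "X \<in> MEwc" and L1: "admissible L1" and L2: "admissible L2"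
  shows "ip (ext_sum X L1) (gen_sum L2) = ip (gen_sum L1) (ext_sum (dag H ED X) L2)"
proof -
  have single: "ip (C (X (E \<xi>))) (C' (E \<eta>)) = ip (C (E \<xi>)) (C' (dag H ED X (E \<eta>)))"
    if C: "C \<in> Mw" and C': "C' \<in> Mw" and "\<xi> \<in> D" "\<eta> \<in> D" for C C' \<xi> \<eta>
  proof -
    obtain C'' where C'': "C'' \<in> Mw" "\<forall>a b. ip (C' a) b = ip a (C'' b)" using Mw_adjoint[OF C'] by blast
    have adj: "ip u (C' v) = ip (C'' u) v" for u v
    proof -
      have "ip u (C' v) = cnj (ip (C' v) u)" by (rule ip_sym)
      also have "\<dots> = cnj (ip v (C'' u))" using C''(2) by simp
      also have "\<dots> = ip (C'' u) v" by (rule ip_sym[symmetric])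
      finally show ?thesis .
    qed
    have "ip (C'' (C (X (E \<xi>)))) (E \<eta>) = ip (C'' (C (E \<xi>))) (dag H ED X (E \<eta>))"
      using MEwc_weak_commute_Mw[OF X Mw_comp[OF C''(1) C]] that by auto
    thus ?thesis by (simp add: adj)
  qed
  show ?thesis
    using L1
  proof (induct L1)
    case (Cons p L1)
    have "ip (fst p (X (E (snd p)))) (gen_sum L2) = ip (fst p (E (snd p))) (ext_sum (dag H ED X) L2)"
      using L2 by (induct L2) (use Cons.prems single in \<open>auto simp: ip_add_right\<close>)
    thus ?case using Cons by (simp add: ip_add_left)
  qed simp
qed

lemma ext_val_adjoint:
  assumes X: "X \<in> MEwc" and w1: "w1 \<in> ZD" and w2: "w2 \<in> ZD"
  shows "ip (ext_val X w1) w2 = ip w1 (ext_val (dag H ED X) w2)"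
proof (rule ip_identity_limit[where P = "{(ext_sum X L, gen_sum L) | L. admissible L}"
      and Q = "{(gen_sum L, ext_sum (dag H ED X) L) | L. admissible L}"])
  note X' = MEwc_dag[OF X]
  fix e :: real assume e: "e > 0"
  obtain L1 where "admissible L1" "nm (w1 - gen_sum L1) < e" "nm (ext_sum X L1 - ext_val X w1) < e"
    using ext_limit_approx[OF dominates_dominating[OF X] w1 ext_limit_ext_val[OF X w1] e] by blast
  thus "\<exists>(a, b)\<in>{(ext_sum X L, gen_sum L) | L. admissible L}.
      nm (a - ext_val X w1) < e \<and> nm (b - w1) < e"
    using nm_commute[of w1 "gen_sum L1"] by auto
  obtain L2 where "admissible L2" "nm (w2 - gen_sum L2) < e"
      "nm (ext_sum (dag H ED X) L2 - ext_val (dag H ED X) w2) < e"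
    using ext_limit_approx[OF dominates_dominating[OF X'] w2 ext_limit_ext_val[OF X' w2] e] by blast
  thus "\<exists>(c, d)\<in>{(gen_sum L, ext_sum (dag H ED X) L) | L. admissible L}.
      nm (c - w2) < e \<and> nm (d - ext_val (dag H ED X) w2) < e"
    using nm_commute[of w2 "gen_sum L2"] by auto
qed (auto simp: ip_ext_sum_gen_sum[OF X])

lemma extension_adjoint:
  assumes X: "X \<in> MEwc" and \<xi>: "\<xi> \<in> D" and \<eta>: "\<eta> \<in> D"
  shows "ip (extension X \<xi>) \<eta> = ip \<xi> (extension (dag H ED X) \<eta>)"
proof -
  have "ip (extension X \<xi>) \<eta> = ip (ext_val X (Z \<xi>)) (Z \<eta>)"
    using \<xi> ip_Z_right[OF extension_ZH[OF X \<xi>]] by (simp add: extension_def)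
  also have "\<dots> = ip (Z \<xi>) (ext_val (dag H ED X) (Z \<eta>))" using \<xi> \<eta> by (intro ext_val_adjoint[OF X]) auto
  also have "\<dots> = ip \<xi> (extension (dag H ED X) \<eta>)"
    using \<eta> ip_Z_left[OF extension_ZH[OF MEwc_dag[OF X] \<eta>]] by (simp add: extension_def)
  finally show ?thesis .
qed

lemma extension_ldag: assumes X: "X \<in> MEwc" shows "ldag H D (extension X)"
  unfolding ldag_def
proof (intro conjI ballI allI impI)
  fix \<eta> assume \<eta>: "\<eta> \<in> D"
  show "\<exists>\<zeta>\<in>D. \<forall>\<xi>\<in>D. ip (extension X \<xi>) \<eta> = ip \<xi> \<zeta>"
    using extension_adjoint[OF X _ \<eta>] extension_D[OF MEwc_dag[OF X] \<eta>] by blast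
next
  fix x y assume "x \<in> D" "y \<in> D"
  thus "extension X (x + y) = extension X x + extension X y" by (rule extension_add[OF X])
next
  fix c x assume "x \<in> D"
  thus "extension X (sm c x) = sm c (extension X x)" by (rule extension_scale[OF X])
qed (simp_all add: extension_D[OF X], simp add: extension_def)

lemma dag_extension: "X \<in> MEwc \<Longrightarrow> \<eta> \<in> D \<Longrightarrow> dag H D (extension X) \<eta> = extension (dag H ED X) \<eta>"
  by (rule dag_eqI[OF D_dense_domain _ extension_D[OF MEwc_dag]]) (simp_all add: extension_adjoint)

lemma extension_Mwc: assumes X: "X \<in> MEwc" shows "extension X \<in> Mwc"
  unfolding bicomm_def
proof (intro CollectI conjI ballI)
  show "ldag H D (extension X)" by (rule extension_ldag[OF X])
  fix C \<xi> \<eta> assume C: "C \<in> Mw" and \<xi>: "\<xi> \<in> D" and \<eta>: "\<eta> \<in> D"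
  have "ip (C (extension X \<xi>)) \<eta> = ip (extension X (C \<xi>)) \<eta>" by (simp add: extension_commute_Mw[OF X C \<xi>])
  also have "\<dots> = ip (C \<xi>) (extension (dag H ED X) \<eta>)" by (rule extension_adjoint[OF X Mw_D[OF C \<xi>] \<eta>])
  also have "\<dots> = ip (C \<xi>) (dag H D (extension X) \<eta>)" by (simp add: dag_extension[OF X \<eta>])
  finally show "ip (C (extension X \<xi>)) \<eta> = ip (C \<xi>) (dag H D (extension X) \<eta>)" .
qed

lemma red_extension: assumes X: "X \<in> MEwc" shows "red (extension X) = X"
proof
  fix x show "red (extension X) x = X x"
  proof (cases "x \<in> ED")
    case True
    then obtain \<xi> where "\<xi> \<in> D" "x = E \<xi>" by blast
    thus ?thesis using True extension_E[OF X] by (simp add: red_ED)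
  next
    case False
    thus ?thesis using ldag_outside[OF bicomm_ldag[OF X] False] by (simp add: red_def)
  qed
qed

theorem reduced_bicommutant_eq: "MEwc = reduce E D Mwc"
proof
  show "MEwc \<subseteq> reduce E D Mwc"
    using red_extension extension_Mwc by (force simp: reduce_eq_image_red)
qed (rule reduce_Mwc_subset)

end

theorem lemma2p3:
  fixes H :: "('a::ab_group_add) hs" and D :: "'a set" and M :: "('a \<Rightarrow> 'a) set"
    and E :: "'a \<Rightarrow> 'a" and Z :: "'a \<Rightarrow> 'a"
  assumes hilb: "is_hilbert H"
    and Dsub: "hsubspace H D" and Ddense: "hclosure H D = UNIV"
    and Mclosed: "closed_ostar H D M"
    and MwD: "\<forall>C\<in>wcomm H UNIV D M. C ` D \<subseteq> D"
    and Ein: "E \<in> wcomm H UNIV D M" and Eproj: "is_projection H UNIV E"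
    and Zdef: "Z = central_support H UNIV D M E"
    and cond_i: "\<forall>X\<in>bicomm H (range E) (E ` D) (reduce E D M). \<exists>Y\<in>bicomm H UNIV D M.
        \<forall>(n::nat) C \<xi> \<eta>. (\<forall>k<n. C k \<in> wcomm H UNIV D M \<and> \<xi> k \<in> D) \<and> \<eta> \<in> D \<longrightarrow>
          hnorm H (\<Sum>k<n. C k (X (E (\<xi> k))))
            \<le> hnorm H (Y ((\<Sum>k<n. C k (E (\<xi> k))) + (\<eta> - Z \<eta>)))"
    and cond_ii: "tclosure H (bicomm H UNIV D M) D
        (module.span (hs_sm H) {C (E \<xi>) | C \<xi>. C \<in> wcomm H UNIV D M \<and> \<xi> \<in> D}) = Z ` D"
  shows "bicomm H (range E) (E ` D) (reduce E D M) = reduce E D (bicomm H UNIV D M)"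
proof -
  have "ostar_alg H D M" using Mclosed by (simp add: closed_ostar_def)
  then interpret reduced_bicommutant_extension H D M E Z
    using assms by unfold_locales blast+
  show ?thesis by (rule reduced_bicommutant_eq)
qed

end
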